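(* Let $\{\boldsymbol A_\eta\}_{\eta\in\mathcal I}$ and $\{\boldsymbol B_\eta\}_{\eta\in\mathcal I}$ be two ergodic families of nonnegative $n\times n$ matrices driven by the same environmental Markov chain $(\tau_t)$, and assume that for every $\eta\in\mathcal I$ the matrices $\boldsymbol A_\eta$ and $\boldsymbol B_\eta$ have the same incidence pattern, i.e. $B^{ij}_\eta=0 \iff A^{ij}_\eta=0$ for all $i,j$. Let $\lambda_S$ and $\lambda_S'$ be the stochastic growth rates of $\boldsymbol z(t+1)=\boldsymbol A_{\tau_{t+1}}\boldsymbol z(t)$ and $\boldsymbol z'(t+1)=\boldsymbol B_{\tau_{t+1}}\boldsymbol z'(t)$ respectively. Define for each $\eta$ and $i,j\in\{1,\dots,n\}$ $$W^{ij}_\eta=\begin{cases}\dfrac{A^{ij}_\eta-B^{ij}_\eta}{B^{ij}_\eta}& \text{if } B^{ij}_\eta\neq 0,\\[2mm] 0 & \text{if } B^{ij}_\eta=0,\end{cases}\qquad W^m_\eta=\min_{i,j}W^{ij}_\eta,\quad W^M_\eta=\max_{i,j}W^{ij}_\eta .$$ Then $W^M_\eta\ge W^m_\eta>-1$ for every $\eta$, and $$\log\lambda_S'+\sum_{\eta\in\mathcal I}\pi_\eta\log(1+W^m_\eta)\;\le\;\log\lambda_S\;\le\;\log\lambda_S'+\sum_{\eta\in\mathcal I}\pi_\eta\log(1+W^M_\eta).$$ In particular, if $\boldsymbol B_\eta=\boldsymbol B$ for all $\eta$ (a fixed nonnegative matrix with the same incidence pattern as every $\boldsymbol A_\eta$),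 then $$\log\rho(\boldsymbol B)+\sum_{\eta}\pi_\eta\log(1+W^m_\eta)\le\log\lambda_S\le\log\rho(\boldsymbol B)+\sum_\eta\pi_\eta\log(1+W^M_\eta),$$ where $\rho$ denotes the spectral radius.
   Context: Standing setting: $\mathcal I$ is a finite or countable set of environmental states; $(\tau_t)_{t\ge0}$ is a homogeneous Markov chain on $\mathcal I$ with a unique stationary distribution $\boldsymbol\pi=(\pi_\eta)_{\eta\in\mathcal I}$ to which its transition probabilities converge geometrically (for finite $\mathcal I$ it suffices that the chain be irreducible and aperiodic). For each $\eta$, $\boldsymbol A_\eta=[A^{ij}_\eta]$ is a nonnegative $n\times n$ matrix. A family $\{\boldsymbol A_\eta\}$ is called ergodic if there is an integer $g\ge1$ such that every product of $g$ matrices from the family (repetitions allowed) has all entries positive, and there are constants $\alpha,\beta>0$ with every entry of every $\boldsymbol A_\eta$ at most $\beta$ and every positive entry at least $\alpha$. The population model is $\boldsymbol z(t+1)=\boldsymbol A_{\tau_{t+1}}\boldsymbol z(t)$ with fixed nonzero $\boldsymbol z(0)\ge 0$; $\|\cdot\|$ is the $\ell^1$ norm. Under these hypotheses the stochastic growth rate (SGR) $\lambda_S$ exists, defined by $\log\lambda_S=\lim_{t\to\infty}\frac1t\log\|\boldsymbol z(t)\|$ almost surely; it is finite and independent of $\boldsymbol z(0)$ and of the initial law of $\tau$. *)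

theory Defs
  imports "HOL-Probability.Probability"
begin

definition stochastic_matrix :: "('i::countable \<Rightarrow> 'i \<Rightarrow> real) \<Rightarrow> bool" where
  "stochastic_matrix P \<longleftrightarrow> (\<forall>i j. 0 \<le> P i j) \<and> (\<forall>i. ((\<lambda>j. P i j) has_sum 1) UNIV)"

fun trans_pow :: "('i::countable \<Rightarrow> 'i \<Rightarrow> real) \<Rightarrow> nat \<Rightarrow> 'i \<Rightarrow> 'i \<Rightarrow> real" where
  "trans_pow P 0 i j = (if i = j then 1 else 0)"
| "trans_pow P (Suc k) i j = (\<Sum>\<^sub>\<infinity>l. trans_pow P k i l * P l j)"

definition distribution :: "('i::countable \<Rightarrow> real) \<Rightarrow> bool" where
  "distribution p \<longleftrightarrow> (\<forall>i. 0 \<le> p i) \<and> (p has_sum 1) UNIV"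

definition stationary :: "('i::countable \<Rightarrow> 'i \<Rightarrow> real) \<Rightarrow> ('i \<Rightarrow> real) \<Rightarrow> bool" where
  "stationary P p \<longleftrightarrow> distribution p \<and> (\<forall>j. ((\<lambda>i. p i * P i j) has_sum p j) UNIV)"

definition geom_converges :: "('i::countable \<Rightarrow> 'i \<Rightarrow> real) \<Rightarrow> ('i \<Rightarrow> real) \<Rightarrow> bool" where
  "geom_converges P p \<longleftrightarrow> (\<exists>r. 0 \<le> r \<and> r < 1 \<and>
     (\<forall>i. \<exists>C. \<forall>k. (\<lambda>j. \<bar>trans_pow P k i j - p j\<bar>) summable_on UNIV \<and>
                   (\<Sum>\<^sub>\<infinity>j. \<bar>trans_pow P k i j - p j\<bar>) \<le> C * r ^ k))"

text \<open>(tau t) for t = 0,1,2,... is a homogeneous Markov chain on M with transition matrix P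
  (arbitrary initial law).\<close>
definition markov_chain ::
  "'w measure \<Rightarrow> (nat \<Rightarrow> 'w \<Rightarrow> 'i::countable) \<Rightarrow> ('i \<Rightarrow> 'i \<Rightarrow> real) \<Rightarrow> bool" where
  "markov_chain M tau P \<longleftrightarrow> prob_space M \<and> stochastic_matrix P \<and>
     (\<forall>t. tau t \<in> measurable M (count_space UNIV)) \<and>
     (\<forall>t (h :: nat \<Rightarrow> 'i) j.
        measure M {w \<in> space M. (\<forall>s\<le>t. tau s w = h s) \<and> tau (Suc t) w = j}
        = measure M {w \<in> space M. \<forall>s\<le>t. tau s w = h s} * P (h t) j)"

definition nonneg_mat :: "real^'n^'n \<Rightarrow> bool" where
  "nonneg_mat X \<longleftrightarrow> (\<forall>i j. 0 \<le> X $ i $ j)"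

definition mat_list_prod :: "(real^'n^'n) list \<Rightarrow> real^'n^'n" where
  "mat_list_prod xs = foldr (**) xs (mat 1)"

definition ergodic_family :: "('i \<Rightarrow> real^'n^'n) \<Rightarrow> bool" where
  "ergodic_family A \<longleftrightarrow> (\<forall>e. nonneg_mat (A e)) \<and>
     (\<exists>g::nat. g \<ge> 1 \<and> (\<forall>es. length es = g \<longrightarrow>
         (\<forall>i j. 0 < mat_list_prod (map A es) $ i $ j))) \<and>
     (\<exists>\<alpha> \<beta>::real. 0 < \<alpha> \<and> 0 < \<beta> \<and>
         (\<forall>e i j. A e $ i $ j \<le> \<beta>) \<and> (\<forall>e i j. 0 < A e $ i $ j \<longrightarrow> \<alpha> \<le> A e $ i $ j))"

fun popz :: "('i \<Rightarrow> real^'n^'n) \<Rightarrow> (nat \<Rightarrow> 'w \<Rightarrow> 'i) \<Rightarrow> real^'n \<Rightarrow> 'w \<Rightarrow> nat \<Rightarrow> real^'n" where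
  "popz A tau z0 w 0 = z0"
| "popz A tau z0 w (Suc t) = A (tau (Suc t) w) *v popz A tau z0 w t"

definition l1norm :: "real^'n \<Rightarrow> real" where
  "l1norm x = (\<Sum>i\<in>UNIV. \<bar>x $ i\<bar>)"

definition is_log_sgr ::
  "'w measure \<Rightarrow> ('i \<Rightarrow> real^'n^'n) \<Rightarrow> (nat \<Rightarrow> 'w \<Rightarrow> 'i) \<Rightarrow> real^'n \<Rightarrow> real \<Rightarrow> bool" where
  "is_log_sgr M A tau z0 L \<longleftrightarrow>
     (AE w in M. (\<lambda>t. ln (l1norm (popz A tau z0 w t)) / real t) \<longlonglongrightarrow> L)"

definition Wij :: "('i \<Rightarrow> real^'n^'n) \<Rightarrow> ('i \<Rightarrow> real^'n^'n) \<Rightarrow> 'i \<Rightarrow> 'n \<Rightarrow> 'n \<Rightarrow> real" where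
  "Wij A B e i j = (if B e $ i $ j \<noteq> 0 then (A e $ i $ j - B e $ i $ j) / B e $ i $ j else 0)"

definition Wmin :: "('i \<Rightarrow> real^'n^'n) \<Rightarrow> ('i \<Rightarrow> real^'n^'n) \<Rightarrow> 'i \<Rightarrow> real" where
  "Wmin A B e = Min {Wij A B e i j | i j. True}"

definition Wmax :: "('i \<Rightarrow> real^'n^'n) \<Rightarrow> ('i \<Rightarrow> real^'n^'n) \<Rightarrow> 'i \<Rightarrow> real" where
  "Wmax A B e = Max {Wij A B e i j | i j. True}"

definition spectral_radius :: "real^'n^'n \<Rightarrow> real" where
  "spectral_radius X = Max {cmod c | c. \<exists>v :: complex^'n. v \<noteq> 0 \<and>
       (\<chi> i j. complex_of_real (X $ i $ j)) *v v = c *s v}"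

end

theory Submission
  imports Defs "HOL-Analysis.Analysis"
begin

text \<open>
  Entrywise (1 + W^m) B \<le> A \<le> (1 + W^M) B in every environment, so along each environment path the
  population vectors satisfy \<Prod>(1 + W^m) z_B \<le> z_A \<le> \<Prod>(1 + W^M) z_B. Taking logarithms, the
  difference of the two log-populations is squeezed between additive functionals of the chain up
  to a bounded error, since by ergodicity orbits started from different nonzero vectors stay within
  constant factors of each other. Geometric convergence of the transition probabilities makes the
  expected time averages of these functionals converge to the stationary means, and dominated
  convergence transfers the almost sure limits of the growth rates to these expectations. For a
  constant B, a Perron eigenvector (a Brouwer fixed point on the simplex, strictly positive by
  ergodicity) grows exactly like \<rho>(B)^t.
\<close>

lemma abs_ln_le:
  fixes x :: real
  assumes "0 < lo" "lo \<le> x" "x \<le> hi"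
  shows "\<bar>ln x\<bar> \<le> \<bar>ln lo\<bar> + \<bar>ln hi\<bar>"
proof -
  have "ln lo \<le> ln x" "ln x \<le> ln hi"
    using assms by simp_all
  then show ?thesis by linarith
qed

lemma ln_add_ln_le:
  fixes a x y :: real
  assumes "0 < a" "0 < x" "a * x \<le> y"
  shows "ln a + ln x \<le> ln y"
proof -
  have "0 < a * x"
    using assms by simp
  then have "ln (a * x) \<le> ln y"
    using assms(3) by simp
  then show ?thesis
    using assms(1,2) by (simp add: ln_mult)
qed

lemma ln_le_ln_add:
  fixes a x y :: real
  assumes "0 < y" "0 < a" "0 < x" "y \<le> a * x"
  shows "ln y \<le> ln a + ln x"
proof -
  have "ln y \<le> ln (a * x)"
    using assms by simp
  then show ?thesis
    using assms(2,3) by (simp add: ln_mult)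
qed

lemma abs_sum_le_of_bounded:
  fixes f :: "'a \<Rightarrow> real"
  assumes "\<forall>e. \<bar>f e\<bar> \<le> K"
  shows "\<bar>\<Sum>s<t. f (x s)\<bar> \<le> real t * K"
proof -
  have "\<bar>\<Sum>s<t. f (x s)\<bar> \<le> (\<Sum>s<t. \<bar>f (x s)\<bar>)"
    by (rule sum_abs)
  also have "\<dots> \<le> (\<Sum>s<t. K)"
    by (rule sum_mono) (use assms in auto)
  finally show ?thesis
    by simp
qed

section \<open>Nonnegative matrices and population vectors\<close>

definition nonneg_vec :: "real^'n \<Rightarrow> bool" where
  "nonneg_vec x \<longleftrightarrow> (\<forall>i. 0 \<le> x $ i)"

lemma matrix_vector_mult_nth: "(X *v x) $ i = (\<Sum>j\<in>UNIV. X $ i $ j * x $ j)"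
  by (simp add: matrix_vector_mult_def)

lemma nonneg_vec_matrix_vector_mult: "nonneg_mat X \<Longrightarrow> nonneg_vec x
    \<Longrightarrow> nonneg_vec (X *v x)"
  unfolding nonneg_vec_def nonneg_mat_def matrix_vector_mult_nth by (auto intro!: sum_nonneg)

lemma matrix_vector_mult_scaled_mono:
  fixes X Y :: "real^'n^'m" and a b c d :: real
  assumes "\<forall>i j. 0 \<le> a * Y $ i $ j" "\<forall>j. 0 \<le> b * y $ j"
    and "\<forall>i j. a * Y $ i $ j \<le> c * X $ i $ j" "\<forall>j. b * y $ j \<le> d * x $ j"
  shows "(a * b) * (Y *v y) $ i \<le> (c * d) * (X *v x) $ i"
proof -
  have "(a * b) * (Y *v y) $ i = (\<Sum>j\<in>UNIV. (a * Y $ i $ j) * (b * y $ j))"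
    unfolding matrix_vector_mult_nth sum_distrib_left by (rule sum.cong) (simp_all add: mult_ac)
  also have "\<dots> \<le> (\<Sum>j\<in>UNIV. (c * X $ i $ j) * (d * x $ j))"
  proof (rule sum_mono)
    fix j
    have "0 \<le> a * Y $ i $ j" "a * Y $ i $ j \<le> c * X $ i $ j" "0 \<le> b * y $ j" "b * y $ j \<le> d * x $ j"
      using assms by auto
    then show "(a * Y $ i $ j) * (b * y $ j) \<le> (c * X $ i $ j) * (d * x $ j)"
      by (meson mult_mono order_trans)
  qed
  also have "\<dots> = (c * d) * (X *v x) $ i"
    unfolding matrix_vector_mult_nth sum_distrib_left by (rule sum.cong) (simp_all add: mult_ac)
  finally show ?thesis .
qed

lemma nonneg_vec_popz: "(\<forall>e. nonneg_mat (X e)) \<Longrightarrow> nonneg_vec z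
    \<Longrightarrow> nonneg_vec (popz X tau z w t)"
  by (induction t) (auto intro: nonneg_vec_matrix_vector_mult)

lemma popz_scaled_mono:
  assumes Y: "\<forall>e. nonneg_mat (Y e)" and a: "\<forall>e. 0 \<le> a e"
    and le: "\<forall>e i j. a e * Y e $ i $ j \<le> c e * X e $ i $ j" and z: "nonneg_vec z"
  shows "(\<Prod>s<t. a (tau (Suc s) w)) * popz Y tau z w t $ i
       \<le> (\<Prod>s<t. c (tau (Suc s) w)) * popz X tau z w t $ i"
proof (induction t arbitrary: i)
  case 0
  then show ?case by simp
next
  case (Suc t)
  let ?e = "tau (Suc t) w"
  have "(a ?e * (\<Prod>s<t. a (tau (Suc s) w))) * (Y ?e *v popz Y tau z w t) $ i
      \<le> (c ?e * (\<Prod>s<t. c (tau (Suc s) w))) * (X ?e *v popz X tau z w t) $ i"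
  proof (rule matrix_vector_mult_scaled_mono)
    show "\<forall>i j. 0 \<le> a ?e * Y ?e $ i $ j"
      using Y a by (simp add: nonneg_mat_def)
    show "\<forall>j. 0 \<le> (\<Prod>s<t. a (tau (Suc s) w)) * popz Y tau z w t $ j"
      using nonneg_vec_popz[OF Y z, of tau w t] a
        by (auto simp: nonneg_vec_def intro!: mult_nonneg_nonneg prod_nonneg)
  qed (use le Suc.IH in auto)
  then show ?case by (simp add: ac_simps)
qed

lemma l1norm_nonneg_vec: "nonneg_vec x \<Longrightarrow> l1norm x = (\<Sum>i\<in>UNIV. x $ i)"
  unfolding l1norm_def nonneg_vec_def by simp

lemma l1norm_scaled_mono:
  "nonneg_vec x \<Longrightarrow> nonneg_vec y \<Longrightarrow> \<forall>i. a * x $ i \<le> b * y $ i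
      \<Longrightarrow> a * l1norm x \<le> b * l1norm y"
  by (simp add: l1norm_nonneg_vec sum_distrib_left sum_mono)

lemma l1norm_pos: "nonneg_vec x \<Longrightarrow> x \<noteq> 0 \<Longrightarrow> 0 < l1norm x"
proof -
  assume x: "nonneg_vec x" "x \<noteq> 0"
  then obtain k where "x $ k \<noteq> 0" by (metis vec_eq_iff zero_index)
  then have "0 < x $ k" using x unfolding nonneg_vec_def by (metis less_eq_real_def)
  also have "\<dots> \<le> (\<Sum>i\<in>UNIV. x $ i)"
    by (rule member_le_sum) (use x in \<open>auto simp: nonneg_vec_def\<close>)
  finally show ?thesis using x by (simp add: l1norm_nonneg_vec)
qed

lemma pos_vec_neq_zero: "\<forall>i. 0 < (x::real^'n) $ i \<Longrightarrow> x \<noteq> 0"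
  by (metis less_irrefl zero_index)

lemma row_lower_le_matrix_vector_mult:
  "\<forall>j. lo \<le> R $ i $ j \<Longrightarrow> nonneg_vec x
      \<Longrightarrow> lo * l1norm x \<le> (R *v x) $ i"
  by (simp add: l1norm_nonneg_vec matrix_vector_mult_nth sum_distrib_left sum_mono
      mult_right_mono nonneg_vec_def)

lemma matrix_vector_mult_le_row_upper:
  "\<forall>j. R $ i $ j \<le> hi \<Longrightarrow> nonneg_vec x
      \<Longrightarrow> (R *v x) $ i \<le> hi * l1norm x"
  by (simp add: l1norm_nonneg_vec matrix_vector_mult_nth sum_distrib_left sum_mono
      mult_right_mono nonneg_vec_def)

section \<open>Ergodic families\<close>

lemma mat_list_prod_Cons: "mat_list_prod (X # Xs) = X ** mat_list_prod Xs"
  by (simp add: mat_list_prod_def)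

lemma mat_list_prod_snoc: "mat_list_prod (Xs @ [X]) = mat_list_prod Xs ** X"
  by (induction Xs) (simp_all add: mat_list_prod_def matrix_mul_assoc)

lemma popz_eq_mat_list_prod:
  "popz X tau z w t = mat_list_prod (map X (rev (map (\<lambda>s. tau (Suc s) w) [0..<t]))) *v z"
  by (induction t) (simp_all add: mat_list_prod_def matrix_vector_mul_assoc[symmetric])

lemma nonneg_mat_mat_list_prod: "\<forall>X\<in>set Xs. nonneg_mat X
    \<Longrightarrow> nonneg_mat (mat_list_prod Xs)"
  by (induction Xs)
    (auto simp: mat_list_prod_def nonneg_mat_def mat_def matrix_matrix_mult_def intro!: sum_nonneg)

lemma mat_list_prod_le:
  fixes Xs :: "(real^'n^'n) list"
  assumes "\<forall>X\<in>set Xs. nonneg_mat X \<and> (\<forall>i j. X $ i $ j \<le> \<beta>)"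
  shows "mat_list_prod Xs $ i $ j \<le> (real CARD('n) * \<beta>) ^ length Xs"
  using assms
proof (induction Xs arbitrary: i j)
  case Nil
  then show ?case by (simp add: mat_list_prod_def mat_def)
next
  case (Cons X Xs)
  have X: "\<forall>k. 0 \<le> X $ i $ k \<and> X $ i $ k \<le> \<beta>"
    using Cons.prems by (simp add: nonneg_mat_def)
  have P: "\<forall>k. 0 \<le> mat_list_prod Xs $ k $ j"
    using nonneg_mat_mat_list_prod[of Xs] Cons.prems by (simp add: nonneg_mat_def)
  have \<beta>: "0 \<le> \<beta>"
    using X by (meson order_trans)
  have "mat_list_prod (X # Xs) $ i $ j = (\<Sum>k\<in>UNIV. X $ i $ k * mat_list_prod Xs $ k $ j)"
    by (simp add: mat_list_prod_Cons matrix_matrix_mult_def)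
  also have "\<dots> \<le> (\<Sum>k\<in>(UNIV::'n set). \<beta> * (real CARD('n) * \<beta>) ^ length Xs)"
    by (rule sum_mono, rule mult_mono) (use X P \<beta> Cons in auto)
  also have "\<dots> = (real CARD('n) * \<beta>) ^ length (X # Xs)"
    by simp
  finally show ?case .
qed

lemma mat_list_prod_pos_ge:
  fixes Xs :: "(real^'n^'n) list"
  assumes "0 \<le> \<alpha>" "\<forall>X\<in>set Xs. nonneg_mat X
      \<and> (\<forall>i j. 0 < X $ i $ j \<longrightarrow> \<alpha> \<le> X $ i $ j)"
    and "0 < mat_list_prod Xs $ i $ j"
  shows "\<alpha> ^ length Xs \<le> mat_list_prod Xs $ i $ j"
  using assms(2,3)
proof (induction Xs arbitrary: i j)
  case Nil
  then show ?case by (simp add: mat_list_prod_def mat_def split: if_splits)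
next
  case (Cons X Xs)
  let ?P = "mat_list_prod Xs"
  have X: "\<forall>k. 0 \<le> X $ i $ k" and P: "\<forall>k. 0 \<le> ?P $ k $ j"
    using nonneg_mat_mat_list_prod[of Xs] Cons.prems(1) by (auto simp: nonneg_mat_def)
  have sum_eq: "mat_list_prod (X # Xs) $ i $ j = (\<Sum>k\<in>UNIV. X $ i $ k * ?P $ k $ j)"
    by (simp add: mat_list_prod_Cons matrix_matrix_mult_def)
  obtain k where k: "0 < X $ i $ k * ?P $ k $ j"
    using Cons.prems(2) sum_nonpos[of UNIV "\<lambda>k. X $ i $ k * ?P $ k $ j"]
    unfolding sum_eq by (meson not_le)
  then have "0 < X $ i $ k" "0 < ?P $ k $ j"
    using X[rule_format, of k] P[rule_format, of k] by (auto simp: zero_less_mult_iff)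
  then have "\<alpha> * \<alpha> ^ length Xs \<le> X $ i $ k * ?P $ k $ j"
    using Cons assms(1) by (intro mult_mono) auto
  also have "\<dots> \<le> mat_list_prod (X # Xs) $ i $ j"
    unfolding sum_eq by (rule member_le_sum) (use X P in auto)
  finally show ?case by simp
qed

lemma ergodic_family_diag_pos:
  assumes "ergodic_family X"
  obtains es where "0 < mat_list_prod (map X (e # es)) $ i $ i"
    and "0 < mat_list_prod (map X (es @ [e])) $ i $ i"
proof -
  obtain g where "g \<ge> 1"
    and pos: "\<forall>es. length es = g \<longrightarrow> (\<forall>i j. 0 < mat_list_prod (map X es) $ i $ j)"
    using assms unfolding ergodic_family_def by blast
  then have "length (e # replicate (g - 1) e) = g" "length (replicate (g - 1) e @ [e]) = g"
    by simp_all
  then show ?thesis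
    using that pos by blast
qed

lemma ergodic_family_row_pos:
  assumes "ergodic_family X"
  shows "\<exists>j. 0 < X e $ i $ j"
proof (rule ccontr)
  obtain es where "0 < mat_list_prod (map X (e # es)) $ i $ i"
    using ergodic_family_diag_pos[OF assms] by metis
  moreover assume "\<nexists>j. 0 < X e $ i $ j"
  then have "\<forall>j. X e $ i $ j = 0"
    using assms unfolding ergodic_family_def nonneg_mat_def by (metis less_eq_real_def)
  ultimately show False
    by (simp add: mat_list_prod_Cons matrix_matrix_mult_def)
qed

lemma ergodic_family_col_pos:
  assumes "ergodic_family X"
  shows "\<exists>i. 0 < X e $ i $ j"
proof (rule ccontr)
  obtain es where "0 < mat_list_prod (map X (es @ [e])) $ j $ j"
    using ergodic_family_diag_pos[OF assms] by metis
  moreover assume "\<nexists>i. 0 < X e $ i $ j"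
  then have "\<forall>i. X e $ i $ j = 0"
    using assms unfolding ergodic_family_def nonneg_mat_def by (metis less_eq_real_def)
  ultimately show False
    by (simp add: mat_list_prod_snoc matrix_matrix_mult_def)
qed

lemma ergodic_family_matrix_vector_mult_pos:
  assumes "ergodic_family X" "\<forall>j. 0 < y $ j"
  shows "0 < (X e *v y) $ i"
proof -
  obtain j where "0 < X e $ i $ j"
    using ergodic_family_row_pos[OF assms(1)] by blast
  then have "0 < X e $ i $ j * y $ j"
    using assms(2) by simp
  also have "\<dots> \<le> (X e *v y) $ i"
    unfolding matrix_vector_mult_nth
    by (rule member_le_sum) (use assms in \<open>auto simp: ergodic_family_def nonneg_mat_def less_imp_le\<close>)
  finally show ?thesis .
qed

lemma matrix_vector_mult_comparable:
  fixes R :: "real^'n^'n"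
  assumes R: "\<forall>i j. lo \<le> R $ i $ j \<and> R $ i $ j \<le> hi" and "0 < lo" "0 < hi"
    and u: "nonneg_vec u" "u \<noteq> 0" and v: "nonneg_vec v" "v \<noteq> 0"
  shows "0 < (R *v u) $ i \<and> lo * l1norm u / (hi * l1norm v) * (R *v v) $ i \<le> (R *v u) $ i"
proof -
  have "0 < l1norm u" "0 < l1norm v"
    using l1norm_pos u v by blast+
  have lower: "lo * l1norm u \<le> (R *v u) $ i"
    using row_lower_le_matrix_vector_mult[of lo R i u] R u by simp
  have "lo * l1norm u / (hi * l1norm v) * (R *v v) $ i
      \<le> lo * l1norm u / (hi * l1norm v) * (hi * l1norm v)"
    using matrix_vector_mult_le_row_upper[of R i hi v] R v \<open>0 < lo\<close> \<open>0 < hi\<close>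
      \<open>0 < l1norm u\<close> \<open>0 < l1norm v\<close>
    by (intro mult_left_mono) simp_all
  also have "\<dots> = lo * l1norm u"
    using \<open>0 < hi\<close> \<open>0 < l1norm v\<close> by simp
  finally show ?thesis
    using lower mult_pos_pos[OF \<open>0 < lo\<close> \<open>0 < l1norm u\<close>] by auto
qed

lemma ergodic_family_products_bounds:
  fixes X :: "'i \<Rightarrow> real^'n^'n"
  assumes "ergodic_family X"
  obtains lo hi g where "0 < lo" "0 < hi"
    and "\<And>es i j. length es = g \<Longrightarrow> lo \<le> mat_list_prod (map X es) $ i $ j
        \<and> mat_list_prod (map X es) $ i $ j \<le> hi"
proof -
  obtain g \<alpha> \<beta> where g: "\<forall>es. length es = g \<longrightarrow> (\<forall>i j. 0 < mat_list_prod (map X es) $ i $ j)"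
    and \<alpha>: "0 < \<alpha>" "\<forall>e i j. 0 < X e $ i $ j \<longrightarrow> \<alpha> \<le> X e $ i $ j"
    and \<beta>: "0 < \<beta>" "\<forall>e i j. X e $ i $ j \<le> \<beta>"
    and nn: "\<forall>e. nonneg_mat (X e)"
    using assms unfolding ergodic_family_def by blast
  have bounds: "\<alpha> ^ g \<le> mat_list_prod (map X es) $ i $ j
      \<and> mat_list_prod (map X es) $ i $ j \<le> (real CARD('n) * \<beta>) ^ g" if "length es = g" for es i j
    using mat_list_prod_le[of "map X es" \<beta>] mat_list_prod_pos_ge[of \<alpha> "map X es"] g \<alpha> \<beta> nn that
    by (auto simp: less_imp_le)
  have "0 < \<alpha> ^ g" "0 < (real CARD('n) * \<beta>) ^ g"
    using \<alpha> \<beta> by simp_all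
  then show ?thesis
    using that bounds by blast
qed

lemma ergodic_orbits_comparable:
  fixes X :: "'i \<Rightarrow> real^'n^'n"
  assumes erg: "ergodic_family X" and u: "nonneg_vec u" "u \<noteq> 0"
    and v: "nonneg_vec v" "v \<noteq> 0"
  obtains g c where "0 < c"
    and "\<And>w t i. g \<le> t
        \<Longrightarrow> 0 < popz X tau u w t $ i \<and> c * popz X tau v w t $ i \<le> popz X tau u w t $ i"
proof -
  obtain lo hi g where "0 < lo" "0 < hi"
    and R: "\<And>es i j. length es = g \<Longrightarrow> lo \<le> mat_list_prod (map X es) $ i $ j
        \<and> mat_list_prod (map X es) $ i $ j \<le> hi"
    using ergodic_family_products_bounds[OF erg] by metis
  define c where "c = lo * l1norm u / (hi * l1norm v)"
  have c: "0 < c"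
    using \<open>0 < lo\<close> \<open>0 < hi\<close> l1norm_pos[OF u] l1norm_pos[OF v] by (simp add: c_def)
  have nn: "\<forall>e. nonneg_mat (X e)"
    using erg by (simp add: ergodic_family_def)
  have orbit: "0 < popz X tau u w t $ i \<and> c * popz X tau v w t $ i \<le> popz X tau u w t $ i"
    if "g \<le> t" for w t i
    using that
  proof (induction t arbitrary: i rule: dec_induct)
    case base
    show ?case
      unfolding popz_eq_mat_list_prod[of X tau _ w g] c_def
      by (rule matrix_vector_mult_comparable[OF _ \<open>0 < lo\<close> \<open>0 < hi\<close> u v]) (simp add: R)
  next
    case (step t)
    let ?e = "tau (Suc t) w"
    have "0 < (X ?e *v popz X tau u w t) $ i"
      using step.IH by (intro ergodic_family_matrix_vector_mult_pos[OF erg]) blast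
    moreover have "(1 * c) * (X ?e *v popz X tau v w t) $ i \<le> (1 * 1) * (X ?e *v popz X tau u w t) $ i"
    proof (rule matrix_vector_mult_scaled_mono)
      show "\<forall>i j. 0 \<le> 1 * X ?e $ i $ j"
        using nn by (simp add: nonneg_mat_def)
      show "\<forall>j. 0 \<le> c * popz X tau v w t $ j"
        using nonneg_vec_popz[OF nn v(1), of tau w t] c by (simp add: nonneg_vec_def)
      show "\<forall>j. c * popz X tau v w t $ j \<le> 1 * popz X tau u w t $ j"
        using step.IH by simp
    qed simp
    ultimately show ?case
      by simp
  qed
  show ?thesis
    by (rule that[OF c orbit])
qed

lemma ergodic_orbits_ln_l1norm_close:
  fixes X :: "'i \<Rightarrow> real^'n^'n"
  assumes erg: "ergodic_family X" and u: "nonneg_vec u" "u \<noteq> 0" and v: "nonneg_vec v" "v \<noteq> 0"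
  obtains g C where "\<And>w t. g \<le> t
      \<Longrightarrow> 0 < l1norm (popz X tau u w t) \<and> 0 < l1norm (popz X tau v w t)
      \<and> \<bar>ln (l1norm (popz X tau u w t)) - ln (l1norm (popz X tau v w t))\<bar> \<le> C"
proof -
  obtain g1 c1 where c1: "0 < c1"
    and g1: "\<And>w t i. g1 \<le> t
        \<Longrightarrow> 0 < popz X tau u w t $ i \<and> c1 * popz X tau v w t $ i \<le> popz X tau u w t $ i"
    using ergodic_orbits_comparable[OF erg u v] by metis
  obtain g2 c2 where c2: "0 < c2"
    and g2: "\<And>w t i. g2 \<le> t
        \<Longrightarrow> 0 < popz X tau v w t $ i \<and> c2 * popz X tau u w t $ i \<le> popz X tau v w t $ i"
    using ergodic_orbits_comparable[OF erg v u] by metis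
  have nn: "\<forall>e. nonneg_mat (X e)"
    using erg by (simp add: ergodic_family_def)
  have "0 < l1norm (popz X tau u w t) \<and> 0 < l1norm (popz X tau v w t)
      \<and> \<bar>ln (l1norm (popz X tau u w t)) - ln (l1norm (popz X tau v w t))\<bar> \<le> \<bar>ln c1\<bar> + \<bar>ln c2\<bar>"
    if "max g1 g2 \<le> t" for w t
  proof -
    let ?U = "l1norm (popz X tau u w t)" and ?V = "l1norm (popz X tau v w t)"
    have vecs: "nonneg_vec (popz X tau u w t)" "nonneg_vec (popz X tau v w t)"
      by (simp_all add: nonneg_vec_popz[OF nn u(1)] nonneg_vec_popz[OF nn v(1)])
    have "g1 \<le> t" "g2 \<le> t"
      using that by simp_all
    then have "\<forall>i. 0 < popz X tau u w t $ i" "\<forall>i. c1 * popz X tau v w t $ i \<le> 1 * popz X tau u w t $ i"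
      "\<forall>i. c2 * popz X tau u w t $ i \<le> 1 * popz X tau v w t $ i"
      using g1 g2 by simp_all
    then have U: "0 < ?U" and "c1 * ?V \<le> 1 * ?U" "c2 * ?U \<le> 1 * ?V"
      using l1norm_pos[OF vecs(1) pos_vec_neq_zero] l1norm_scaled_mono vecs by blast+
    moreover have V: "0 < ?V"
      using calculation c2 by (metis mult_pos_pos mult_1 order_less_le_trans)
    ultimately have "ln c1 + ln ?V \<le> ln ?U" "ln c2 + ln ?U \<le> ln ?V"
      using c1 c2 by (simp_all add: ln_add_ln_le)
    then show ?thesis
      using U V by linarith
  qed
  then show ?thesis
    using that by blast
qed

section \<open>The comparison ratios\<close>

lemma Wij_set_eq_range: "{Wij A B e i j | i j. True} = (\<lambda>(i, j). Wij A B e i j) ` UNIV"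
  by auto

lemma Wmin_le_Wij: "Wmin A B e \<le> Wij A B e i j"
  unfolding Wmin_def Wij_set_eq_range by (rule Min_le) auto

lemma Wij_le_Wmax: "Wij A B e i j \<le> Wmax A B e"
  unfolding Wmax_def Wij_set_eq_range by (rule Max_ge) auto

lemma Wmin_attained: "\<exists>i j. Wmin A B e = Wij A B e i j"
proof -
  have "Wmin A B e \<in> (\<lambda>(i, j). Wij A B e i j) ` UNIV"
    unfolding Wmin_def Wij_set_eq_range by (rule Min_in) auto
  then show ?thesis by auto
qed

lemma Wmax_attained: "\<exists>i j. Wmax A B e = Wij A B e i j"
proof -
  have "Wmax A B e \<in> (\<lambda>(i, j). Wij A B e i j) ` UNIV"
    unfolding Wmax_def Wij_set_eq_range by (rule Max_in) auto
  then show ?thesis by auto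
qed

lemma one_plus_Wij_eq: "B e $ i $ j \<noteq> 0
    \<Longrightarrow> (1 + Wij A B e i j) * B e $ i $ j = A e $ i $ j"
  by (simp add: Wij_def field_simps)

lemma one_plus_Wmin_mult_le:
  assumes "nonneg_mat (B e)" "B e $ i $ j = 0 \<Longrightarrow> A e $ i $ j = 0"
  shows "(1 + Wmin A B e) * B e $ i $ j \<le> A e $ i $ j"
proof (cases "B e $ i $ j = 0")
  case False
  then have "(1 + Wmin A B e) * B e $ i $ j \<le> (1 + Wij A B e i j) * B e $ i $ j"
    using assms(1) Wmin_le_Wij[of A B e i j] by (intro mult_right_mono) (simp_all add: nonneg_mat_def)
  then show ?thesis
    using one_plus_Wij_eq[of B e i j A] False by simp
qed (use assms in simp)

lemma le_one_plus_Wmax_mult: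
  assumes "nonneg_mat (B e)" "B e $ i $ j = 0 \<Longrightarrow> A e $ i $ j = 0"
  shows "A e $ i $ j \<le> (1 + Wmax A B e) * B e $ i $ j"
proof (cases "B e $ i $ j = 0")
  case False
  then have "(1 + Wij A B e i j) * B e $ i $ j \<le> (1 + Wmax A B e) * B e $ i $ j"
    using assms(1) Wij_le_Wmax[of A B e i j] by (intro mult_right_mono) (simp_all add: nonneg_mat_def)
  then show ?thesis
    using one_plus_Wij_eq[of B e i j A] False by simp
qed (use assms in simp)

lemma ergodic_families_Wij_bounds:
  assumes ergA: "ergodic_family A" and ergB: "ergodic_family B"
    and pattern: "\<forall>e i j. B e $ i $ j = 0 \<longleftrightarrow> A e $ i $ j = 0"
  obtains lo hi where "0 < lo" "\<And>e i j. lo \<le> 1 + Wij A B e i j \<and> 1 + Wij A B e i j \<le> hi"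
proof -
  obtain \<alpha>A \<beta>A where A: "0 < \<alpha>A" "\<forall>e i j. A e $ i $ j \<le> \<beta>A"
      "\<forall>e i j. 0 < A e $ i $ j \<longrightarrow> \<alpha>A \<le> A e $ i $ j" "\<forall>e. nonneg_mat (A e)"
    using ergA unfolding ergodic_family_def by blast
  obtain \<alpha>B \<beta>B where B: "0 < \<alpha>B" "0 < \<beta>B" "\<forall>e i j. B e $ i $ j \<le> \<beta>B"
      "\<forall>e i j. 0 < B e $ i $ j \<longrightarrow> \<alpha>B \<le> B e $ i $ j" "\<forall>e. nonneg_mat (B e)"
    using ergB unfolding ergodic_family_def by blast
  have "min 1 (\<alpha>A / \<beta>B) \<le> 1 + Wij A B e i j
      \<and> 1 + Wij A B e i j \<le> max 1 (\<beta>A / \<alpha>B)" for e i j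
  proof (cases "B e $ i $ j = 0")
    case False
    let ?a = "A e $ i $ j" and ?b = "B e $ i $ j"
    have "0 < ?b" "0 < ?a"
      using False pattern A(4) B(5) unfolding nonneg_mat_def by (metis less_eq_real_def)+
    moreover have "0 \<le> \<beta>A"
      using A(2) \<open>0 < ?a\<close> by (meson less_le_trans less_imp_le)
    ultimately have "\<alpha>A / \<beta>B \<le> ?a / ?b" "?a / ?b \<le> \<beta>A / \<alpha>B"
      using A B by (auto intro!: frac_le)
    moreover have "1 + Wij A B e i j = ?a / ?b"
      using False by (simp add: Wij_def field_simps)
    ultimately show ?thesis
      by linarith
  qed (simp add: Wij_def)
  moreover have "0 < min 1 (\<alpha>A / \<beta>B)"
    using A B by simp
  ultimately show ?thesis
    using that by blast
qed

lemma Wmin_le_Wmax: "Wmin A B e \<le> Wmax A B e"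
  by (rule order_trans[OF Wmin_le_Wij Wij_le_Wmax])

lemma ergodic_families_Wmin_Wmax_bounds:
  assumes "ergodic_family A" "ergodic_family B" "\<forall>e i j. B e $ i $ j = 0 \<longleftrightarrow> A e $ i $ j = 0"
  obtains lo hi where "0 < lo" "\<And>e. lo \<le> 1 + Wmin A B e" "\<And>e. 1 + Wmax A B e \<le> hi"
proof -
  obtain lo hi where "0 < lo" "\<And>e i j. lo \<le> 1 + Wij A B e i j \<and> 1 + Wij A B e i j \<le> hi"
    using ergodic_families_Wij_bounds[OF assms] by blast
  moreover have "lo \<le> 1 + Wmin A B e" "1 + Wmax A B e \<le> hi" for e
    using Wmin_attained[of A B e] Wmax_attained[of A B e] calculation(2) by metis+
  ultimately show ?thesis
    using that by blast
qed

lemma l1norm_popz_Wmin_Wmax: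
  assumes A: "\<forall>e. nonneg_mat (A e)" and B: "\<forall>e. nonneg_mat (B e)"
    and pattern: "\<forall>e i j. B e $ i $ j = 0 \<longrightarrow> A e $ i $ j = 0"
    and W: "\<forall>e. 0 < 1 + Wmin A B e" and z: "nonneg_vec z"
  shows "(\<Prod>s<t. 1 + Wmin A B (tau (Suc s) w)) * l1norm (popz B tau z w t) \<le> l1norm (popz A tau z w t)"
    and "l1norm (popz A tau z w t) \<le> (\<Prod>s<t. 1 + Wmax A B (tau (Suc s) w)) * l1norm (popz B tau z w t)"
proof -
  let ?m = "\<lambda>e. 1 + Wmin A B e" and ?M = "\<lambda>e. 1 + Wmax A B e"
  let ?zA = "popz A tau z w t" and ?zB = "popz B tau z w t"
  have "?m e * B e $ i $ j \<le> A e $ i $ j" for e i j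
    by (rule one_plus_Wmin_mult_le) (use B pattern in auto)
  moreover have "A e $ i $ j \<le> ?M e * B e $ i $ j" for e i j
    by (rule le_one_plus_Wmax_mult) (use B pattern in auto)
  ultimately have m_le: "\<forall>e i j. ?m e * B e $ i $ j \<le> 1 * A e $ i $ j"
    and le_M: "\<forall>e i j. 1 * A e $ i $ j \<le> ?M e * B e $ i $ j"
    by simp_all
  have lower: "(\<Prod>s<t. ?m (tau (Suc s) w)) * ?zB $ i \<le> (\<Prod>s<t. 1) * ?zA $ i" for i
    by (rule popz_scaled_mono[OF B _ m_le z]) (use W less_imp_le in blast)
  have upper: "(\<Prod>s<t. 1) * ?zA $ i \<le> (\<Prod>s<t. ?M (tau (Suc s) w)) * ?zB $ i" for i
    by (rule popz_scaled_mono[OF A _ le_M z]) simp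
  have vecs: "nonneg_vec ?zA" "nonneg_vec ?zB"
    by (simp_all add: nonneg_vec_popz A B z)
  show "(\<Prod>s<t. ?m (tau (Suc s) w)) * l1norm ?zB \<le> l1norm ?zA"
    using l1norm_scaled_mono[OF vecs(2) vecs(1), of "\<Prod>s<t. ?m (tau (Suc s) w)" 1] lower by simp
  show "l1norm ?zA \<le> (\<Prod>s<t. ?M (tau (Suc s) w)) * l1norm ?zB"
    using l1norm_scaled_mono[OF vecs(1) vecs(2), of 1 "\<Prod>s<t. ?M (tau (Suc s) w)"] upper by simp
qed

lemma ln_l1norm_popz_Wmin_Wmax:
  assumes A: "\<forall>e. nonneg_mat (A e)" and B: "\<forall>e. nonneg_mat (B e)"
    and pattern: "\<forall>e i j. B e $ i $ j = 0 \<longrightarrow> A e $ i $ j = 0"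
    and W: "\<forall>e. 0 < 1 + Wmin A B e" and z: "nonneg_vec z"
    and pos: "0 < l1norm (popz B tau z w t)"
  shows "(\<Sum>s<t. ln (1 + Wmin A B (tau (Suc s) w)))
      \<le> ln (l1norm (popz A tau z w t)) - ln (l1norm (popz B tau z w t))"
    and "ln (l1norm (popz A tau z w t)) - ln (l1norm (popz B tau z w t))
      \<le> (\<Sum>s<t. ln (1 + Wmax A B (tau (Suc s) w)))"
proof -
  let ?m = "\<lambda>e. 1 + Wmin A B e" and ?M = "\<lambda>e. 1 + Wmax A B e"
  let ?zA = "popz A tau z w t" and ?zB = "popz B tau z w t"
  define Pm PM where "Pm = (\<Prod>s<t. ?m (tau (Suc s) w))" and "PM = (\<Prod>s<t. ?M (tau (Suc s) w))"
  have "0 < ?M e" for e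
    using W[rule_format, of e] Wmin_le_Wmax[of A B e] by linarith
  then have M: "\<forall>e. 0 < ?M e"
    by blast
  have Pm: "Pm * l1norm ?zB \<le> l1norm ?zA" and PM: "l1norm ?zA \<le> PM * l1norm ?zB"
    unfolding Pm_def PM_def by (rule l1norm_popz_Wmin_Wmax[OF A B pattern W z])+
  have "0 < Pm" "0 < PM"
    using W M by (simp_all add: prod_pos Pm_def PM_def)
  have "ln Pm = (\<Sum>s<t. ln (?m (tau (Suc s) w)))" "ln PM = (\<Sum>s<t. ln (?M (tau (Suc s) w)))"
    unfolding Pm_def PM_def by (rule ln_prod, simp, metis W M less_irrefl)+
  moreover have "ln Pm + ln (l1norm ?zB) \<le> ln (l1norm ?zA)"
    using \<open>0 < Pm\<close> pos Pm by (rule ln_add_ln_le)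
  moreover have "ln (l1norm ?zA) \<le> ln PM + ln (l1norm ?zB)"
  proof (rule ln_le_ln_add[OF _ \<open>0 < PM\<close> pos PM])
    show "0 < l1norm ?zA"
      using mult_pos_pos[OF \<open>0 < Pm\<close> pos] Pm by linarith
  qed
  ultimately show "(\<Sum>s<t. ln (?m (tau (Suc s) w))) \<le> ln (l1norm ?zA) - ln (l1norm ?zB)"
    "ln (l1norm ?zA) - ln (l1norm ?zB) \<le> (\<Sum>s<t. ln (?M (tau (Suc s) w)))"
    by simp_all
qed

section \<open>Marginals of the environmental chain\<close>

lemma pmf_summable_on: "pmf p summable_on A"
proof -
  have "Infinite_Set_Sum.abs_summable_on (pmf p) A" by (rule pmf_abs_summable)
  then have "Infinite_Sum.abs_summable_on (pmf p) A" by (rule abs_summable_equivalent[THEN iffD2])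
  then show ?thesis by (rule abs_summable_summable)
qed

lemma summable_on_mult_bounded:
  fixes q g :: "'a \<Rightarrow> real"
  assumes q: "q summable_on UNIV" "\<forall>x. 0 \<le> q x" and g: "\<forall>x. \<bar>g x\<bar> \<le> K"
  shows "(\<lambda>x. q x * g x) summable_on UNIV" "Infinite_Sum.abs_summable_on (\<lambda>x. q x * g x) UNIV"
proof -
  have "(\<lambda>x. q x * K) summable_on UNIV" using q(1) by (rule summable_on_cmult_left)
  then have a: "Infinite_Sum.abs_summable_on (\<lambda>x. q x * K) UNIV"
    by (rule summable_on_iff_abs_summable_on_real[THEN iffD1])
  show b: "Infinite_Sum.abs_summable_on (\<lambda>x. q x * g x) UNIV"
  proof (rule Infinite_Sum.abs_summable_on_comparison_test[OF a])
    fix x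
    have "\<bar>q x * g x\<bar> = q x * \<bar>g x\<bar>" using q by (simp add: abs_mult)
    also have "\<dots> \<le> q x * K" using q g by (simp add: mult_left_mono)
    also have "\<dots> \<le> \<bar>q x * K\<bar>" by simp
    finally show "norm (q x * g x) \<le> norm (q x * K)" by simp
  qed
  then show "(\<lambda>x. q x * g x) summable_on UNIV"
    by (rule summable_on_iff_abs_summable_on_real[THEN iffD2])
qed

lemma expectation_pmf_eq_infsum:
  fixes g :: "'a \<Rightarrow> real"
  assumes g: "\<forall>x. \<bar>g x\<bar> \<le> K"
  shows "measure_pmf.expectation p g = (\<Sum>\<^sub>\<infinity>x. pmf p x * g x)"
proof -
  have "Infinite_Sum.abs_summable_on (\<lambda>x. pmf p x * g x) UNIV"
    using summable_on_mult_bounded[OF pmf_summable_on _ g] by simp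
  then have "Infinite_Set_Sum.abs_summable_on (\<lambda>x. pmf p x * g x) UNIV"
    by (rule abs_summable_equivalent[THEN iffD1])
  then show ?thesis by (simp add: pmf_expectation_eq_infsetsum infsetsum_infsum)
qed

lemma nn_integral_count_space_has_sum:
  fixes f :: "'a \<Rightarrow> real"
  assumes "\<forall>x. 0 \<le> f x" "(f has_sum s) UNIV"
  shows "(\<integral>\<^sup>+x. ennreal (f x) \<partial>count_space UNIV) = ennreal s"
proof -
  have "f summable_on UNIV" using assms by (meson has_sum_imp_summable)
  then have "Infinite_Sum.abs_summable_on f UNIV" by (rule summable_on_iff_abs_summable_on_real[THEN iffD1])
  then have ab: "Infinite_Set_Sum.abs_summable_on f UNIV" by (rule abs_summable_equivalent[THEN iffD1])
  have "(\<integral>\<^sup>+x. ennreal (f x) \<partial>count_space UNIV) = ennreal (infsetsum f UNIV)"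
    by (rule nn_integral_conv_infsetsum[OF ab]) (use assms in auto)
  also have "infsetsum f UNIV = infsum f UNIV" by (rule infsetsum_infsum[OF ab])
  also have "\<dots> = s" using assms(2) by (simp add: infsumI)
  finally show ?thesis .
qed

definition transition_pmf :: "('i::countable \<Rightarrow> 'i \<Rightarrow> real) \<Rightarrow> 'i \<Rightarrow> 'i pmf" where
  "transition_pmf P i = embed_pmf (P i)"

lemma pmf_transition_pmf: "stochastic_matrix P \<Longrightarrow> pmf (transition_pmf P i) j = P i j"
  unfolding transition_pmf_def stochastic_matrix_def
  by (subst pmf_embed_pmf) (use nn_integral_count_space_has_sum[of "P i" 1] in auto)

fun transition_pmf_pow :: "('i::countable \<Rightarrow> 'i \<Rightarrow> real) \<Rightarrow> nat \<Rightarrow> 'i \<Rightarrow> 'i pmf" where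
  "transition_pmf_pow P 0 a = return_pmf a"
| "transition_pmf_pow P (Suc t) a = transition_pmf_pow P t a \<bind> transition_pmf P"

lemma stochastic_matrix_le_1: "stochastic_matrix P \<Longrightarrow> P i j \<le> 1"
proof -
  assume s: "stochastic_matrix P"
  have "sum (P i) {j} \<le> 1"
    by (rule finite_sum_le_has_sum) (use s in \<open>auto simp: stochastic_matrix_def\<close>)
  then show ?thesis by simp
qed

lemma pmf_transition_pmf_pow: "stochastic_matrix P
    \<Longrightarrow> pmf (transition_pmf_pow P t a) j = trans_pow P t a j"
proof (induction t arbitrary: j)
  case 0 then show ?case by (simp add: indicator_def)
next
  case (Suc t)
  have b: "\<forall>l. \<bar>P l j\<bar> \<le> 1"
    using Suc.prems stochastic_matrix_le_1 unfolding stochastic_matrix_def by auto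
  have "pmf (transition_pmf_pow P (Suc t) a) j = measure_pmf.expectation (transition_pmf_pow P t a) (\<lambda>l. P l j)"
    by (simp add: pmf_bind pmf_transition_pmf Suc.prems)
  also have "\<dots> = (\<Sum>\<^sub>\<infinity>l. pmf (transition_pmf_pow P t a) l * P l j)"
    by (rule expectation_pmf_eq_infsum[OF b])
  also have "\<dots> = trans_pow P (Suc t) a j" using Suc by simp
  finally show ?case .
qed

text \<open>The law of a discrete random variable; meaningful only for measurable f on a probability
  space, otherwise Abs_pmf yields an unspecified value.\<close>

definition distr_pmf :: "'w measure \<Rightarrow> ('w \<Rightarrow> 'a::countable) \<Rightarrow> 'a pmf" where
  "distr_pmf M f = Abs_pmf (distr M (count_space UNIV) f)"

lemma measure_pmf_distr_pmf:
  assumes "prob_space M" "f \<in> measurable M (count_space UNIV)"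
  shows "measure_pmf (distr_pmf M f) = distr M (count_space UNIV) f"
proof -
  have ps: "prob_space (distr M (count_space UNIV) f)"
    by (rule prob_space.prob_space_distr[OF assms])
  then interpret D: prob_space "distr M (count_space UNIV) f" .
  have ae: "AE x in distr M (count_space UNIV) f. measure (distr M (count_space UNIV) f) {x} \<noteq> 0"
  proof (subst D.AE_support_countable)
    show "sets (distr M (count_space UNIV) f) = UNIV" by simp
    show "\<exists>S. countable S \<and> (AE x in distr M (count_space UNIV) f. x \<in> S)"
      by (rule exI[of _ UNIV]) simp
  qed
  have mem: "distr M (count_space UNIV) f \<in> {M. prob_space M \<and> sets M = UNIV
      \<and> (AE x in M. measure M {x} \<noteq> 0)}"
    using ps ae by simp
  then show ?thesis unfolding distr_pmf_def by (rule Abs_pmf_inverse)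
qed

lemma pmf_distr_pmf:
  assumes "prob_space M" "f \<in> measurable M (count_space UNIV)"
  shows "pmf (distr_pmf M f) x = measure M {w \<in> space M. f w = x}"
proof -
  have "pmf (distr_pmf M f) x = measure (measure_pmf (distr_pmf M f)) {x}"
    by (rule measure_pmf_single[symmetric])
  also have "\<dots> = measure (distr M (count_space UNIV) f) {x}"
    by (simp only: measure_pmf_distr_pmf[OF assms])
  also have "\<dots> = measure M (f -` {x} \<inter> space M)"
    by (rule measure_distr) (use assms in auto)
  also have "f -` {x} \<inter> space M = {w \<in> space M. f w = x}" by auto
  finally show ?thesis .
qed

lemma map_pmf_distr_pmf:
  assumes "prob_space M" "f \<in> measurable M (count_space UNIV)"
  shows "map_pmf g (distr_pmf M f) = distr_pmf M (\<lambda>w. g (f w))"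
proof -
  have m2: "(\<lambda>w. g (f w)) \<in> measurable M (count_space UNIV)"
    by (rule measurable_compose[OF assms(2)]) simp
  have "measure_pmf (map_pmf g (distr_pmf M f)) = distr (distr M (count_space UNIV) f) (count_space UNIV) g"
    by (simp add: map_pmf_rep_eq measure_pmf_distr_pmf[OF assms])
  also have "\<dots> = distr M (count_space UNIV) (g \<circ> f)"
    by (rule distr_distr) (use assms in auto)
  also have "\<dots> = measure_pmf (distr_pmf M (\<lambda>w. g (f w)))"
    by (simp add: measure_pmf_distr_pmf[OF assms(1) m2] comp_def)
  finally show ?thesis by (simp only: measure_pmf_inject)
qed

lemma expectation_distr_pmf:
  fixes g :: "'a::countable \<Rightarrow> real"
  assumes "prob_space M" "f \<in> measurable M (count_space UNIV)"
  shows "(\<integral>w. g (f w) \<partial>M) = measure_pmf.expectation (distr_pmf M f) g"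
  unfolding measure_pmf_distr_pmf[OF assms] by (rule integral_distr[symmetric, OF assms(2)]) simp

text \<open>The path (tau 0 w, ..., tau t w); the Markov property in markov_chain is stated on such paths.\<close>

definition history :: "(nat \<Rightarrow> 'w \<Rightarrow> 'i) \<Rightarrow> nat \<Rightarrow> 'w \<Rightarrow> 'i list" where
  "history tau t w = map (\<lambda>s. tau s w) [0..<Suc t]"

lemma history_Suc: "history tau (Suc t) w = history tau t w @ [tau (Suc t) w]"
  by (simp add: history_def)

lemma last_history: "last (history tau t w) = tau t w"
  by (simp add: history_def)

lemma length_history: "length (history tau t w) = Suc t"
  by (simp add: history_def)

lemma nth_history: "s \<le> t \<Longrightarrow> history tau t w ! s = tau s w"
  unfolding history_def by (simp del: upt_Suc add: less_Suc_eq_le)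

lemma history_eq_iff: "length ys = Suc t
    \<Longrightarrow> history tau t w = ys \<longleftrightarrow> (\<forall>s\<le>t. tau s w = ys ! s)"
  unfolding list_eq_iff_nth_eq by (auto simp: length_history nth_history less_Suc_eq_le)

lemma measurable_history:
  assumes "\<forall>t. tau t \<in> measurable M (count_space (UNIV :: 'i::countable set))"
  shows "(\<lambda>w. history tau t w) \<in> measurable M (count_space UNIV)"
proof (induction t)
  case 0
  have "(\<lambda>w. history tau 0 w) = (\<lambda>w. (\<lambda>e. [e]) (tau 0 w))" by (simp add: history_def)
  also have "\<dots> \<in> measurable M (count_space UNIV)"
    by (rule measurable_compose[OF assms[rule_format]]) simp
  finally show ?case .
next
  case (Suc t)
  have "(\<lambda>w. history tau t w @ [tau (Suc t) w]) \<in> measurable M (count_space UNIV)"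
  proof (rule measurable_compose_countable[where f="\<lambda>e w. history tau t w @ [e]", OF _ assms[rule_format]])
    fix e :: 'i
    show "(\<lambda>w. history tau t w @ [e]) \<in> measurable M (count_space UNIV)"
      by (rule measurable_compose[OF Suc]) simp
  qed
  then show ?case by (simp add: history_Suc)
qed

definition marginal_pmf :: "'w measure \<Rightarrow> (nat \<Rightarrow> 'w \<Rightarrow> 'i::countable) \<Rightarrow> nat \<Rightarrow> 'i pmf" where
  "marginal_pmf M tau t = distr_pmf M (tau t)"

context
  fixes M :: "'w measure" and tau :: "nat \<Rightarrow> 'w \<Rightarrow> 'i::countable" and P
  assumes mc: "markov_chain M tau P"
begin

lemma markov_chain_prob_space: "prob_space M"
  using mc by (simp add: markov_chain_def)

lemma markov_chain_stochastic: "stochastic_matrix P"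
  using mc by (simp add: markov_chain_def)

lemma markov_chain_measurable: "tau t \<in> measurable M (count_space UNIV)"
  using mc by (simp add: markov_chain_def)

lemma measurable_history_chain: "(\<lambda>w. history tau t w) \<in> measurable M (count_space UNIV)"
  by (rule measurable_history) (use mc in \<open>simp add: markov_chain_def\<close>)

lemma measurable_history_step:
  "(\<lambda>w. (history tau t w, tau (Suc t) w)) \<in> measurable M (count_space UNIV)"
proof (rule measurable_compose_countable[where f = "\<lambda>e w. (history tau t w, e)"])
  show "(\<lambda>w. (history tau t w, e)) \<in> measurable M (count_space UNIV)" for e
    by (rule measurable_compose[OF measurable_history_chain]) simp
qed (rule markov_chain_measurable)

lemma pmf_history_step:
  "pmf (distr_pmf M (\<lambda>w. (history tau t w, tau (Suc t) w))) (ys, j) =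
   pmf (distr_pmf M (history tau t)) ys * P (last ys) j"
proof (cases "length ys = Suc t")
  case True
  have last: "ys ! t = last ys"
    using True by (subst last_conv_nth) auto
  have step: "{w \<in> space M. history tau t w = ys \<and> tau (Suc t) w = j} =
        {w \<in> space M. (\<forall>s\<le>t. tau s w = ys ! s) \<and> tau (Suc t) w = j}"
    and hist: "{w \<in> space M. history tau t w = ys} = {w \<in> space M. \<forall>s\<le>t. tau s w = ys ! s}"
    by (rule Collect_cong, simp add: history_eq_iff[OF True])+
  have "measure M {w \<in> space M. (\<forall>s\<le>t. tau s w = ys ! s) \<and> tau (Suc t) w = j}
        = measure M {w \<in> space M. \<forall>s\<le>t. tau s w = ys ! s} * P (ys ! t) j"
    using mc unfolding markov_chain_def by blast
  then show ?thesis
    by (simp add: pmf_distr_pmf[OF markov_chain_prob_space measurable_history_step]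
        pmf_distr_pmf[OF markov_chain_prob_space measurable_history_chain] step hist last)
next
  case False
  then have empty: "{w \<in> space M. history tau t w = ys \<and> tau (Suc t) w = j} = {}"
    "{w \<in> space M. history tau t w = ys} = {}"
    using length_history by (metis (mono_tags, lifting) empty_Collect_eq prod.inject)+
  show ?thesis
    by (simp add: pmf_distr_pmf[OF markov_chain_prob_space measurable_history_step]
        pmf_distr_pmf[OF markov_chain_prob_space measurable_history_chain] empty)
qed

lemma distr_pmf_history_step:
  "distr_pmf M (\<lambda>w. (history tau t w, tau (Suc t) w)) =
   distr_pmf M (history tau t) \<bind> (\<lambda>ys. map_pmf (Pair ys) (transition_pmf P (last ys)))"
proof (rule pmf_eqI)
  fix x :: "'i list \<times> 'i"
  obtain ys j where x: "x = (ys, j)" by (cases x)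
  have pm: "pmf (map_pmf (Pair zs) (transition_pmf P (last zs))) (ys, j)
      = (if zs = ys then P (last ys) j else 0)" for zs
  proof (cases "zs = ys")
    case True
    then show ?thesis
      using pmf_map_inj'[of "Pair zs" "transition_pmf P (last zs)" j]
      by (simp add: pmf_transition_pmf[OF markov_chain_stochastic] inj_on_def)
  next
    case False
    then show ?thesis by (subst pmf_map_outside) auto
  qed
  let ?H = "distr_pmf M (history tau t)"
  have "pmf (?H \<bind> (\<lambda>ys. map_pmf (Pair ys) (transition_pmf P (last ys)))) (ys, j)
      = measure_pmf.expectation ?H (\<lambda>zs. pmf (map_pmf (Pair zs) (transition_pmf P (last zs))) (ys, j))"
    by (rule pmf_bind)
  also have "\<dots> = measure_pmf.expectation ?H (\<lambda>zs. P (last ys) j * indicator {ys} zs)"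
    by (rule Bochner_Integration.integral_cong) (auto simp: pm indicator_def)
  also have "\<dots> = P (last ys) j * measure_pmf.expectation ?H (indicator {ys})"
    by (rule integral_mult_right_zero)
  also have "measure_pmf.expectation ?H (indicator {ys}) = pmf ?H ys"
    by (simp add: measure_pmf_single)
  finally show "pmf (distr_pmf M (\<lambda>w. (history tau t w, tau (Suc t) w))) x =
     pmf (?H \<bind> (\<lambda>ys. map_pmf (Pair ys) (transition_pmf P (last ys)))) x"
    by (simp add: x pmf_history_step)
qed

lemma marginal_pmf_Suc: "marginal_pmf M tau (Suc t) = marginal_pmf M tau t \<bind> transition_pmf P"
proof -
  have "marginal_pmf M tau (Suc t) = map_pmf snd (distr_pmf M (\<lambda>w. (history tau t w, tau (Suc t) w)))"
    by (simp add: marginal_pmf_def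
        map_pmf_distr_pmf[OF markov_chain_prob_space measurable_history_step])
  also have "\<dots> = distr_pmf M (history tau t) \<bind> (\<lambda>ys. transition_pmf P (last ys))"
    by (simp add: distr_pmf_history_step map_bind_pmf pmf.map_comp comp_def)
  also have "\<dots> = map_pmf last (distr_pmf M (history tau t)) \<bind> transition_pmf P"
    by (simp add: bind_map_pmf)
  also have "map_pmf last (distr_pmf M (history tau t)) = marginal_pmf M tau t"
    by (simp add: map_pmf_distr_pmf[OF markov_chain_prob_space measurable_history_chain]
        last_history marginal_pmf_def)
  finally show ?thesis .
qed

lemma marginal_pmf_eq_bind: "marginal_pmf M tau t = marginal_pmf M tau 0 \<bind> transition_pmf_pow P t"
  by (induction t) (simp_all add: bind_return_pmf' marginal_pmf_Suc bind_assoc_pmf)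

lemma integral_marginal_pmf:
  "(\<integral>w. (g :: 'i \<Rightarrow> real) (tau t w) \<partial>M) = measure_pmf.expectation (marginal_pmf M tau t) g"
  unfolding marginal_pmf_def
  by (rule expectation_distr_pmf[OF markov_chain_prob_space markov_chain_measurable])

end

section \<open>Time averages along the chain\<close>

lemma infsum_diff_real:
  fixes f g :: "'a \<Rightarrow> real"
  assumes "f summable_on A" "g summable_on A"
  shows "(\<Sum>\<^sub>\<infinity>x\<in>A. f x - g x) = infsum f A - infsum g A"
proof -
  have "(\<Sum>\<^sub>\<infinity>x\<in>A. f x + (- g x)) = infsum f A + (\<Sum>\<^sub>\<infinity>x\<in>A. - g x)"
    by (rule infsum_add[OF assms(1) summable_on_uminus[THEN iffD2, OF assms(2)]])
  then show ?thesis by (simp add: infsum_uminus)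
qed

lemma distribution_summable_on: "distribution \<pi> \<Longrightarrow> \<pi> summable_on UNIV"
  unfolding distribution_def by (meson has_sum_imp_summable)

lemma abs_expectation_minus_infsum_le:
  fixes q :: "'a::countable pmf" and f :: "'a \<Rightarrow> real"
  assumes dist: "distribution \<pi>" and fb: "\<forall>x. \<bar>f x\<bar> \<le> K"
    and summ: "(\<lambda>j. \<bar>pmf q j - \<pi> j\<bar>) summable_on UNIV"
  shows "\<bar>measure_pmf.expectation q f - (\<Sum>\<^sub>\<infinity>j. \<pi> j * f j)\<bar> \<le> K * (\<Sum>\<^sub>\<infinity>j. \<bar>pmf q j - \<pi> j\<bar>)"
proof -
  have "0 \<le> K"
    using fb by (meson abs_ge_zero order_trans)
  have "(\<lambda>j. pmf q j * f j) summable_on UNIV" "(\<lambda>j. \<pi> j * f j) summable_on UNIV"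
    using summable_on_mult_bounded(1)[OF pmf_summable_on _ fb]
      summable_on_mult_bounded(1)[OF distribution_summable_on[OF dist] _ fb] dist
    by (auto simp: distribution_def)
  then have diff: "measure_pmf.expectation q f - (\<Sum>\<^sub>\<infinity>j. \<pi> j * f j) = (\<Sum>\<^sub>\<infinity>j. (pmf q j - \<pi> j) * f j)"
    unfolding expectation_pmf_eq_infsum[OF fb]
      by (subst infsum_diff_real[symmetric]) (simp_all add: algebra_simps)
  have bound: "norm ((pmf q j - \<pi> j) * f j) \<le> K * \<bar>pmf q j - \<pi> j\<bar>" for j
    using fb mult_left_mono[of "\<bar>f j\<bar>" K "\<bar>pmf q j - \<pi> j\<bar>"]
      by (simp add: abs_mult mult.commute)
  have sK: "(\<lambda>j. K * \<bar>pmf q j - \<pi> j\<bar>) summable_on UNIV"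
    by (rule summable_on_cmult_right[OF summ])
  have ab: "Infinite_Sum.abs_summable_on (\<lambda>j. (pmf q j - \<pi> j) * f j) UNIV"
  proof (rule Infinite_Sum.abs_summable_on_comparison_test)
    show "Infinite_Sum.abs_summable_on (\<lambda>j. K * \<bar>pmf q j - \<pi> j\<bar>) UNIV"
      using sK by (rule summable_on_iff_abs_summable_on_real[THEN iffD1])
    show "norm ((pmf q j - \<pi> j) * f j) \<le> norm (K * \<bar>pmf q j - \<pi> j\<bar>)" for j
      using bound[of j] \<open>0 \<le> K\<close> by simp
  qed
  have "\<bar>\<Sum>\<^sub>\<infinity>j. (pmf q j - \<pi> j) * f j\<bar> \<le> (\<Sum>\<^sub>\<infinity>j. norm ((pmf q j - \<pi> j) * f j))"
    using norm_infsum_bound[OF ab] by simp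
  also have "\<dots> \<le> (\<Sum>\<^sub>\<infinity>j. K * \<bar>pmf q j - \<pi> j\<bar>)"
    by (rule infsum_mono) (use ab sK bound in auto)
  also have "\<dots> = K * (\<Sum>\<^sub>\<infinity>j. \<bar>pmf q j - \<pi> j\<bar>)"
    by (rule infsum_cmult_right')
  finally show ?thesis
    using diff by simp
qed

lemma expectation_transition_pmf_pow_LIMSEQ:
  fixes P :: "'i::countable \<Rightarrow> 'i \<Rightarrow> real" and f :: "'i \<Rightarrow> real"
  assumes stoch: "stochastic_matrix P" and geom: "geom_converges P \<pi>" and dist: "distribution \<pi>"
    and fb: "\<forall>x. \<bar>f x\<bar> \<le> K"
  shows "(\<lambda>t. measure_pmf.expectation (transition_pmf_pow P t a) f) \<longlonglongrightarrow> (\<Sum>\<^sub>\<infinity>e. \<pi> e * f e)"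
proof -
  obtain r where r: "0 \<le> r" "r < 1"
    and "\<forall>i. \<exists>C. \<forall>k. (\<lambda>j. \<bar>trans_pow P k i j - \<pi> j\<bar>) summable_on UNIV
      \<and> (\<Sum>\<^sub>\<infinity>j. \<bar>trans_pow P k i j - \<pi> j\<bar>) \<le> C * r ^ k"
    using geom unfolding geom_converges_def by blast
  then obtain C where C: "\<And>k. (\<lambda>j. \<bar>trans_pow P k a j - \<pi> j\<bar>) summable_on UNIV"
    "\<And>k. (\<Sum>\<^sub>\<infinity>j. \<bar>trans_pow P k a j - \<pi> j\<bar>) \<le> C * r ^ k"
    by blast
  have "0 \<le> K"
    using fb by (meson abs_ge_zero order_trans)
  let ?d = "\<lambda>t. measure_pmf.expectation (transition_pmf_pow P t a) f - (\<Sum>\<^sub>\<infinity>e. \<pi> e * f e)"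
  have bound: "norm (?d t) \<le> K * C * r ^ t" for t
  proof -
    have "\<bar>?d t\<bar> \<le> K * (\<Sum>\<^sub>\<infinity>j. \<bar>trans_pow P t a j - \<pi> j\<bar>)"
      using abs_expectation_minus_infsum_le[OF dist fb, of "transition_pmf_pow P t a"] C(1)
      by (simp add: pmf_transition_pmf_pow[OF stoch])
    also have "\<dots> \<le> K * (C * r ^ t)"
      using C(2) \<open>0 \<le> K\<close> by (rule mult_left_mono)
    finally show ?thesis
      by (simp add: mult.assoc)
  qed
  have "(\<lambda>t. K * C * r ^ t) \<longlonglongrightarrow> 0"
    by (rule tendsto_mult_right_zero, rule LIMSEQ_power_zero) (use r in simp)
  then have "?d \<longlonglongrightarrow> 0"
    by (rule Lim_null_comparison[rotated]) (use bound in \<open>simp add: always_eventually\<close>)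
  then show ?thesis
    by (rule LIM_zero_cancel)
qed

lemma expectation_bind_pmf_bounded:
  fixes f :: "'a \<Rightarrow> real"
  assumes fb: "\<forall>x. \<bar>f x\<bar> \<le> K"
  shows "measure_pmf.expectation (p \<bind> N) f = measure_pmf.expectation p (\<lambda>a. measure_pmf.expectation (N a) f)"
proof -
  have "measure_pmf.expectation (p \<bind> N) f = integral\<^sup>L (measure_pmf p \<bind> (\<lambda>x. measure_pmf (N x))) f"
    by (simp add: measure_pmf_bind)
  also have "\<dots> = (\<integral>x. integral\<^sup>L (measure_pmf (N x)) f \<partial>measure_pmf p)"
  proof (rule integral_bind[where K="count_space UNIV" and B=K and B'=1])
    show "f \<in> borel_measurable (count_space UNIV)" by simp
    show "\<bar>f x\<bar> \<le> K" for x using fb by blast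
    show "(\<lambda>x. measure_pmf (N x)) \<in> measurable (measure_pmf p) (subprob_algebra (count_space UNIV))"
      using measurable_measure_pmf[of N] by (simp add: measurable_space)
    show "finite_measure (measure_pmf p)" by (rule measure_pmf.finite_measure)
    show "AE x in measure_pmf p. emeasure (measure_pmf (N x)) (space (measure_pmf (N x))) \<le> ennreal 1"
      by (simp add: measure_pmf.emeasure_space_1)
  qed
  finally show ?thesis .
qed

lemma markov_chain_expectation_LIMSEQ:
  fixes f :: "'i::countable \<Rightarrow> real"
  assumes mc: "markov_chain M tau P" and geom: "geom_converges P \<pi>" and dist: "distribution \<pi>"
    and fb: "\<forall>x. \<bar>f x\<bar> \<le> K"
  shows "(\<lambda>t. \<integral>w. f (tau t w) \<partial>M) \<longlonglongrightarrow> (\<Sum>\<^sub>\<infinity>e. \<pi> e * f e)"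
proof -
  define L where "L = (\<Sum>\<^sub>\<infinity>e. \<pi> e * f e)"
  define h where "h t a = measure_pmf.expectation (transition_pmf_pow P t a) f" for t a
  have eq: "(\<integral>w. f (tau t w) \<partial>M) = measure_pmf.expectation (marginal_pmf M tau 0) (h t)" for t
    unfolding integral_marginal_pmf[OF mc] marginal_pmf_eq_bind[OF mc, of t] h_def
      by (rule expectation_bind_pmf_bounded[OF fb])
  have hb: "\<bar>h t a\<bar> \<le> K" for t a
  proof -
    have "\<bar>h t a\<bar> \<le> measure_pmf.expectation (transition_pmf_pow P t a) (\<lambda>x. \<bar>f x\<bar>)"
      unfolding h_def by (rule integral_abs_bound)
    also have "\<dots> \<le> measure_pmf.expectation (transition_pmf_pow P t a) (\<lambda>x. K)"
      by (rule integral_mono) (use fb in \<open>auto intro!: measure_pmf.integrable_const_bound[where B=K]\<close>)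
    also have "\<dots> = K" by simp
    finally show ?thesis .
  qed
  have "(\<lambda>t. measure_pmf.expectation (marginal_pmf M tau 0) (h t)) \<longlonglongrightarrow> measure_pmf.expectation (marginal_pmf M tau 0) (\<lambda>a. L)"
  proof (rule integral_dominated_convergence[where w="\<lambda>_. K"])
    show "(\<lambda>a. L) \<in> borel_measurable (measure_pmf (marginal_pmf M tau 0))" by simp
    show "h t \<in> borel_measurable (measure_pmf (marginal_pmf M tau 0))" for t by simp
    show "integrable (measure_pmf (marginal_pmf M tau 0)) (\<lambda>_. K)" by simp
    show "AE a in measure_pmf (marginal_pmf M tau 0). (\<lambda>t. h t a) \<longlonglongrightarrow> L"
      unfolding h_def L_def
      by (rule AE_I2, rule expectation_transition_pmf_pow_LIMSEQ[OF markov_chain_stochastic[OF mc] geom dist fb])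
    show "AE a in measure_pmf (marginal_pmf M tau 0). norm (h t a) \<le> K" for t
      using hb by simp
  qed
  then show ?thesis unfolding eq L_def by simp
qed

lemma LIMSEQ_cesaro_mean:
  fixes a :: "nat \<Rightarrow> real"
  assumes "a \<longlonglongrightarrow> L"
  shows "(\<lambda>n. (\<Sum>s<n. a s) / real n) \<longlonglongrightarrow> L"
proof (rule LIMSEQ_I)
  fix \<epsilon> :: real assume e: "0 < \<epsilon>"
  define b where "b s = a s - L" for s
  have "b \<longlonglongrightarrow> 0" unfolding b_def using assms by (rule LIM_zero)
  then obtain N where N: "\<And>s. s \<ge> N \<Longrightarrow> norm (b s) < \<epsilon> / 2"
    using e by (metis LIMSEQ_D half_gt_zero diff_zero)
  define B where "B = (\<Sum>s<N. \<bar>b s\<bar>)"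
  have B0: "0 \<le> B" unfolding B_def by (simp add: sum_nonneg)
  obtain N2 :: nat where N2: "N2 > 2 * B / \<epsilon>" using reals_Archimedean2 by blast
  show "\<exists>no. \<forall>n\<ge>no. norm ((\<Sum>s<n. a s) / real n - L) < \<epsilon>"
  proof (intro exI allI impI)
    fix n assume n: "n \<ge> max (Suc N) N2"
    then have nN: "N \<le> n" and n0: "0 < n" by auto
    have eq: "(\<Sum>s<n. a s) / real n - L = (\<Sum>s<n. b s) / real n"
      using n0 by (simp add: b_def sum_subtractf field_simps)
    have split: "{..<n} = {..<N} \<union> {N..<n}" using nN by auto
    have "\<bar>\<Sum>s<n. b s\<bar> \<le> (\<Sum>s<n. \<bar>b s\<bar>)" by (rule sum_abs)
    also have "\<dots> = B + (\<Sum>s\<in>{N..<n}. \<bar>b s\<bar>)"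
      unfolding B_def split by (subst sum.union_disjoint) auto
    also have "(\<Sum>s\<in>{N..<n}. \<bar>b s\<bar>) \<le> (\<Sum>s\<in>{N..<n}. \<epsilon> / 2)"
      by (rule sum_mono) (use N in \<open>auto simp: less_imp_le\<close>)
    also have "\<dots> \<le> real n * (\<epsilon> / 2)" using e by simp
    finally have s1: "\<bar>\<Sum>s<n. b s\<bar> \<le> B + real n * (\<epsilon> / 2)" by simp
    have "B < real n * (\<epsilon> / 2)"
    proof -
      have "2 * B / \<epsilon> < real n" using N2 n by linarith
      then have "2 * B < real n * \<epsilon>" using e by (simp add: field_simps)
      then show ?thesis by simp
    qed
    with s1 have "\<bar>\<Sum>s<n. b s\<bar> < real n * \<epsilon>" by simp
    then have "\<bar>\<Sum>s<n. b s\<bar> / real n < \<epsilon>" using n0 by (simp add: field_simps)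
    then show "norm ((\<Sum>s<n. a s) / real n - L) < \<epsilon>" using eq by simp
  qed
qed

lemma popz_cong: "\<forall>s\<le>t. tau s w = tau' s w'
    \<Longrightarrow> popz X tau z w t = popz X tau' z w' t"
  by (induction t) auto

lemma measurable_popz:
  assumes "markov_chain M tau P"
  shows "(\<lambda>w. F (popz X tau z w t)) \<in> borel_measurable M"
proof -
  have "(\<lambda>w. F (popz X (\<lambda>s ys. ys ! s) z (history tau t w) t)) \<in> borel_measurable M"
    by (rule measurable_compose[OF measurable_history_chain[OF assms]]) simp
  moreover have "popz X (\<lambda>s ys. ys ! s) z (history tau t w) t = popz X tau z w t" for w
    by (rule popz_cong) (simp add: nth_history)
  ultimately show ?thesis
    by simp
qed

lemma (in prob_space) integral_LIMSEQ_bounded: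
  fixes Y :: "nat \<Rightarrow> 'a \<Rightarrow> real"
  assumes "\<And>k. Y k \<in> borel_measurable M" "\<And>k w. w \<in> space M \<Longrightarrow> \<bar>Y k w\<bar> \<le> B"
    and "AE w in M. (\<lambda>k. Y k w) \<longlonglongrightarrow> \<Delta>"
  shows "(\<lambda>k. integral\<^sup>L M (Y k)) \<longlonglongrightarrow> \<Delta>"
proof -
  have "(\<lambda>k. integral\<^sup>L M (Y k)) \<longlonglongrightarrow> integral\<^sup>L M (\<lambda>w. \<Delta>)"
    by (rule integral_dominated_convergence[where w = "\<lambda>_. B"]) (use assms in auto)
  then show ?thesis
    by (simp add: prob_space)
qed

lemma markov_chain_cesaro_expectation_LIMSEQ:
  fixes f :: "'i::countable \<Rightarrow> real"
  assumes mc: "markov_chain M tau P" and geom: "geom_converges P \<pi>" and dist: "distribution \<pi>"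
    and fb: "\<forall>x. \<bar>f x\<bar> \<le> K"
  shows "(\<lambda>n. (\<Sum>s<n. \<integral>w. f (tau (Suc s) w) \<partial>M) / real n) \<longlonglongrightarrow> (\<Sum>\<^sub>\<infinity>e. \<pi> e * f e)"
  using LIMSEQ_Suc[OF markov_chain_expectation_LIMSEQ[OF mc geom dist fb]] by (rule LIMSEQ_cesaro_mean)

text \<open>Only expectations of the additive functional are controlled (through the marginals of the
  chain), so the almost sure limit is moved inside the expectation by dominated convergence.\<close>

lemma stationary_mean_le_limit:
  fixes D :: "nat \<Rightarrow> 'w \<Rightarrow> real" and f :: "'i::countable \<Rightarrow> real"
  assumes mc: "markov_chain M tau P" and geom: "geom_converges P \<pi>" and dist: "distribution \<pi>"
    and fb: "\<forall>x. \<bar>f x\<bar> \<le> K"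
    and D: "\<And>t. D t \<in> borel_measurable M"
    and lim: "AE w in M. (\<lambda>t. D t w / real t) \<longlonglongrightarrow> \<Delta>"
    and g: "1 \<le> g"
    and low: "\<And>t w. g \<le> t \<Longrightarrow> w \<in> space M
        \<Longrightarrow> (\<Sum>s<t. f (tau (Suc s) w)) + c \<le> D t w"
    and bnd: "\<And>t w. g \<le> t \<Longrightarrow> w \<in> space M
        \<Longrightarrow> \<bar>D t w\<bar> \<le> real t * B"
  shows "(\<Sum>\<^sub>\<infinity>e. \<pi> e * f e) \<le> \<Delta>"
proof -
  interpret prob_space M
    by (rule markov_chain_prob_space[OF mc])
  define Y where "Y k w = D (k + g) w / real (k + g)" for k w
  define a where "a s = (\<integral>w. f (tau (Suc s) w) \<partial>M)" for s
  define lo where "lo k = ((\<Sum>s<k + g. a s) + c) / real (k + g)" for k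
  have pos: "0 < real (k + g)" for k
    using g by simp
  have Y_meas: "Y k \<in> borel_measurable M" for k
    unfolding Y_def using D by measurable
  have Y_bound: "norm (Y k w) \<le> B" if "w \<in> space M" for k w
    using bnd[of "k + g" w] that pos[of k] by (simp add: Y_def divide_le_eq mult.commute)
  have Y_int: "integrable M (Y k)" for k
    by (rule integrable_const_bound[where B = B]) (use Y_bound Y_meas in auto)
  have EY: "(\<lambda>k. integral\<^sup>L M (Y k)) \<longlonglongrightarrow> \<Delta>"
  proof (rule integral_LIMSEQ_bounded[OF Y_meas])
    show "AE w in M. (\<lambda>k. Y k w) \<longlonglongrightarrow> \<Delta>"
      using lim unfolding Y_def by eventually_elim (rule LIMSEQ_ignore_initial_segment)
  qed (use Y_bound in simp)
  have f_int: "integrable M (\<lambda>w. f (tau s w))" for s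
    by (rule integrable_const_bound[where B = K])
      (use fb markov_chain_measurable[OF mc] in \<open>auto intro: measurable_compose\<close>)
  have "lo k \<le> integral\<^sup>L M (Y k)" for k
  proof -
    have "lo k = integral\<^sup>L M (\<lambda>w. ((\<Sum>s<k + g. f (tau (Suc s) w)) + c) / real (k + g))"
      by (simp add: lo_def a_def integral_sum f_int prob_space)
    also have "\<dots> \<le> integral\<^sup>L M (Y k)"
    proof (rule integral_mono)
      show "integrable M (\<lambda>w. ((\<Sum>s<k + g. f (tau (Suc s) w)) + c) / real (k + g))"
        using f_int by (intro integrable_divide Bochner_Integration.integrable_add
            Bochner_Integration.integrable_sum) simp_all
      show "((\<Sum>s<k + g. f (tau (Suc s) w)) + c) / real (k + g) \<le> Y k w" if "w \<in> space M" for w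
        unfolding Y_def using low[of "k + g" w] that pos[of k] by (simp add: divide_right_mono)
    qed (rule Y_int)
    finally show ?thesis .
  qed
  moreover have "lo \<longlonglongrightarrow> (\<Sum>\<^sub>\<infinity>e. \<pi> e * f e)"
  proof -
    have "(\<lambda>k. (\<Sum>s<k + g. a s) / real (k + g)) \<longlonglongrightarrow> (\<Sum>\<^sub>\<infinity>e. \<pi> e * f e)"
      using markov_chain_cesaro_expectation_LIMSEQ[OF mc geom dist fb] unfolding a_def
      by (rule LIMSEQ_ignore_initial_segment)
    moreover have "(\<lambda>k. c / real (k + g)) \<longlonglongrightarrow> 0"
      using lim_const_over_n by (rule LIMSEQ_ignore_initial_segment)
    ultimately show ?thesis
      unfolding lo_def add_divide_distrib using tendsto_add by fastforce
  qed
  ultimately show ?thesis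
    using EY by (intro LIMSEQ_le) auto
qed

section \<open>Comparison of stochastic growth rates\<close>

lemma ergodic_families_ln_Wmin_Wmax_bounded:
  assumes "ergodic_family A" "ergodic_family B" "\<forall>e i j. B e $ i $ j = 0 \<longleftrightarrow> A e $ i $ j = 0"
  obtains K where "\<forall>e. 0 < 1 + Wmin A B e"
    and "\<forall>e. \<bar>ln (1 + Wmin A B e)\<bar> \<le> K" "\<forall>e. \<bar>ln (1 + Wmax A B e)\<bar> \<le> K"
proof -
  obtain lo hi where lo: "0 < lo"
    and bounds: "\<And>e. lo \<le> 1 + Wmin A B e" "\<And>e. 1 + Wmax A B e \<le> hi"
    using ergodic_families_Wmin_Wmax_bounds[OF assms] by blast
  have "lo \<le> 1 + Wmax A B e" "1 + Wmin A B e \<le> hi" for e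
    using bounds[of e] Wmin_le_Wmax[of A B e] by linarith+
  then have "\<forall>e. \<bar>ln (1 + Wmin A B e)\<bar> \<le> \<bar>ln lo\<bar> + \<bar>ln hi\<bar>"
    "\<forall>e. \<bar>ln (1 + Wmax A B e)\<bar> \<le> \<bar>ln lo\<bar> + \<bar>ln hi\<bar>"
    using abs_ln_le[OF lo] bounds by simp_all
  moreover have "\<forall>e. 0 < 1 + Wmin A B e"
    using lo bounds(1) less_le_trans by blast
  ultimately show ?thesis
    using that by blast
qed

lemma ln_l1norm_popz_diff_bounds:
  fixes A B :: "'i \<Rightarrow> real^'n^'n"
  assumes ergA: "ergodic_family A" and ergB: "ergodic_family B"
    and pattern: "\<forall>e i j. B e $ i $ j = 0 \<longleftrightarrow> A e $ i $ j = 0"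
    and z0: "nonneg_vec z0" "z0 \<noteq> 0" and z0': "nonneg_vec z0'" "z0' \<noteq> 0"
  obtains g C where "1 \<le> g" "0 \<le> C"
    and "\<And>t w. g \<le> t \<Longrightarrow> (\<Sum>s<t. ln (1 + Wmin A B (tau (Suc s) w))) - C
        \<le> ln (l1norm (popz A tau z0 w t)) - ln (l1norm (popz B tau z0' w t))"
    and "\<And>t w. g \<le> t \<Longrightarrow> ln (l1norm (popz A tau z0 w t)) - ln (l1norm (popz B tau z0' w t))
        \<le> (\<Sum>s<t. ln (1 + Wmax A B (tau (Suc s) w))) + C"
proof -
  obtain g C where close: "\<And>w t. g \<le> t
      \<Longrightarrow> 0 < l1norm (popz B tau z0 w t) \<and> 0 < l1norm (popz B tau z0' w t)
      \<and> \<bar>ln (l1norm (popz B tau z0 w t)) - ln (l1norm (popz B tau z0' w t))\<bar> \<le> C"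
    using ergodic_orbits_ln_l1norm_close[OF ergB z0 z0'] by blast
  obtain K where W: "\<forall>e. 0 < 1 + Wmin A B e"
    using ergodic_families_ln_Wmin_Wmax_bounded[OF ergA ergB pattern] by blast
  have nonneg: "\<forall>e. nonneg_mat (A e)" "\<forall>e. nonneg_mat (B e)"
    using ergA ergB by (simp_all add: ergodic_family_def)
  have "0 \<le> C"
    using close[of "max g 1"] by fastforce
  moreover have "(\<Sum>s<t. ln (1 + Wmin A B (tau (Suc s) w))) - C
        \<le> ln (l1norm (popz A tau z0 w t)) - ln (l1norm (popz B tau z0' w t))
      \<and> ln (l1norm (popz A tau z0 w t)) - ln (l1norm (popz B tau z0' w t))
        \<le> (\<Sum>s<t. ln (1 + Wmax A B (tau (Suc s) w))) + C"
    if "max g 1 \<le> t" for t w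
    using ln_l1norm_popz_Wmin_Wmax[OF nonneg _ W z0(1), where tau = tau and w = w and t = t]
      pattern close[where t = t and w = w] that
    by auto
  ultimately show ?thesis
    using that[of "max g 1" C] by simp
qed

lemma log_sgr_comparison:
  fixes M :: "'w measure" and tau :: "nat \<Rightarrow> 'w \<Rightarrow> 'i::countable"
    and A B :: "'i \<Rightarrow> real^'n^'n"
  assumes chain: "markov_chain M tau P" and geom: "geom_converges P \<pi>" and dist: "distribution \<pi>"
    and ergA: "ergodic_family A" and ergB: "ergodic_family B"
    and pattern: "\<forall>e i j. B e $ i $ j = 0 \<longleftrightarrow> A e $ i $ j = 0"
    and z0: "nonneg_vec z0" "z0 \<noteq> 0" and z0': "nonneg_vec z0'" "z0' \<noteq> 0"
    and sgrA: "is_log_sgr M A tau z0 LA" and sgrB: "is_log_sgr M B tau z0' LB"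
  shows "LB + (\<Sum>\<^sub>\<infinity>e. \<pi> e * ln (1 + Wmin A B e)) \<le> LA"
    and "LA \<le> LB + (\<Sum>\<^sub>\<infinity>e. \<pi> e * ln (1 + Wmax A B e))"
proof -
  define fm fM where "fm e = ln (1 + Wmin A B e)" and "fM e = - ln (1 + Wmax A B e)" for e
  obtain K where fm: "\<forall>e. \<bar>fm e\<bar> \<le> K" and fM: "\<forall>e. \<bar>fM e\<bar> \<le> K"
    using ergodic_families_ln_Wmin_Wmax_bounded[OF ergA ergB pattern] unfolding fm_def fM_def
    by (metis abs_minus_cancel)
  define D where "D t w = ln (l1norm (popz A tau z0 w t)) - ln (l1norm (popz B tau z0' w t))" for t w
  obtain g C where g: "1 \<le> g" and "0 \<le> C"
    and lower: "\<And>t w. g \<le> t \<Longrightarrow> (\<Sum>s<t. fm (tau (Suc s) w)) + - C \<le> D t w"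
    and upper: "\<And>t w. g \<le> t \<Longrightarrow> (\<Sum>s<t. fM (tau (Suc s) w)) + - C \<le> - D t w"
    using ln_l1norm_popz_diff_bounds[OF ergA ergB pattern z0 z0', where tau = tau]
    unfolding D_def fm_def fM_def sum_negf by (smt (verit))
  have "\<bar>D t w\<bar> \<le> real t * (K + C)" "\<bar>- D t w\<bar> \<le> real t * (K + C)" if "g \<le> t" for t w
  proof -
    have "C \<le> real t * C"
      using \<open>0 \<le> C\<close> g that mult_right_mono[of 1 "real t" C] by simp
    then show "\<bar>D t w\<bar> \<le> real t * (K + C)" "\<bar>- D t w\<bar> \<le> real t * (K + C)"
      using lower[OF that, of w] upper[OF that, of w]
        abs_sum_le_of_bounded[OF fm, where t = t and x = "\<lambda>s. tau (Suc s) w"]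
        abs_sum_le_of_bounded[OF fM, where t = t and x = "\<lambda>s. tau (Suc s) w"]
      unfolding abs_le_iff distrib_left by linarith+
  qed
  moreover have D_meas: "D t \<in> borel_measurable M" "(\<lambda>w. - D t w) \<in> borel_measurable M" for t
    unfolding D_def by (intro borel_measurable_diff borel_measurable_uminus measurable_popz[OF chain])+
  moreover have lim: "AE w in M. (\<lambda>t. D t w / real t) \<longlonglongrightarrow> LA - LB"
    using sgrA sgrB unfolding is_log_sgr_def
    by eventually_elim (simp add: D_def diff_divide_distrib tendsto_diff)
  moreover from lim have "AE w in M. (\<lambda>t. - D t w / real t) \<longlonglongrightarrow> - (LA - LB)"
    by eventually_elim (use tendsto_minus in fastforce)
  ultimately have "(\<Sum>\<^sub>\<infinity>e. \<pi> e * fm e) \<le> LA - LB" "(\<Sum>\<^sub>\<infinity>e. \<pi> e * fM e) \<le> - (LA - LB)"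
    using stationary_mean_le_limit[OF chain geom dist fm _ _ g lower]
      stationary_mean_le_limit[OF chain geom dist fM _ _ g upper] by blast+
  moreover have "(\<Sum>\<^sub>\<infinity>e. \<pi> e * fM e) = - (\<Sum>\<^sub>\<infinity>e. \<pi> e * ln (1 + Wmax A B e))"
    unfolding fM_def by (simp add: infsum_uminus)
  ultimately show "LB + (\<Sum>\<^sub>\<infinity>e. \<pi> e * ln (1 + Wmin A B e)) \<le> LA"
    "LA \<le> LB + (\<Sum>\<^sub>\<infinity>e. \<pi> e * ln (1 + Wmax A B e))"
    unfolding fm_def by linarith+
qed

section \<open>Constant environments\<close>

lemma popz_const_eigenvector:
  assumes "X *v u = r *\<^sub>R u"
  shows "popz (\<lambda>_. X) tau u w t = (r ^ t) *\<^sub>R u"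
proof (induction t)
  case (Suc t)
  have "X *v ((r ^ t) *\<^sub>R u) = (r ^ t) *\<^sub>R (X *v u)"
    by (simp add: vec_eq_iff matrix_vector_mult_def sum_distrib_left algebra_simps)
  then show ?case
    using Suc assms by (simp add: mult.commute)
qed simp

lemma compact_convex_simplex:
  shows "compact {x::real^'n. nonneg_vec x \<and> (\<Sum>i\<in>UNIV. x $ i) = 1}"
    and "convex {x::real^'n. nonneg_vec x \<and> (\<Sum>i\<in>UNIV. x $ i) = 1}"
proof -
  let ?S = "{x::real^'n. nonneg_vec x \<and> (\<Sum>i\<in>UNIV. x $ i) = 1}"
  have "?S = (\<Inter>i. {x. 0 \<le> x $ i}) \<inter> {x. (\<Sum>i\<in>UNIV. x $ i) = 1}"
    by (auto simp: nonneg_vec_def)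
  then have "closed ?S"
    by (auto intro!: closed_Int closed_INT closed_Collect_le closed_Collect_eq continuous_intros)
  moreover have "norm x \<le> 1" if "x \<in> ?S" for x
  proof -
    have "norm x \<le> (\<Sum>i\<in>UNIV. \<bar>x $ i\<bar>)"
      by (rule norm_le_l1_cart)
    also have "\<dots> = 1"
      using that by (simp add: nonneg_vec_def)
    finally show ?thesis .
  qed
  then have "bounded ?S"
    by (auto simp: bounded_iff)
  ultimately show "compact ?S"
    by (simp add: compact_eq_bounded_closed)
  show "convex ?S"
    unfolding convex_def nonneg_vec_def by (auto simp: sum.distrib sum_distrib_left[symmetric])
qed

lemma nonneg_eigenvector_exists:
  fixes X :: "real^'n^'n"
  assumes nn: "nonneg_mat X" and col: "\<And>j. \<exists>i. 0 < X $ i $ j"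
  obtains x r where "nonneg_vec x" "x \<noteq> 0" "0 < r" "X *v x = r *\<^sub>R x"
proof -
  \<comment> \<open>Brouwer on the simplex for x \<mapsto> X x / l1norm (X x); the column condition keeps the
    denominator positive.\<close>
  define S where "S = {x::real^'n. nonneg_vec x \<and> (\<Sum>i\<in>UNIV. x $ i) = 1}"
  define s where "s x = (\<Sum>i\<in>UNIV. (X *v x) $ i)" for x
  define f where "f x = inverse (s x) *\<^sub>R (X *v x)" for x
  have s_pos: "0 < s x" if "x \<in> S" for x
  proof -
    have x: "nonneg_vec x" "x \<noteq> 0"
      using that by (auto simp: S_def)
    then obtain j where j: "0 < x $ j"
      by (metis less_eq_real_def nonneg_vec_def vec_eq_iff zero_index)
    obtain i where "0 < X $ i $ j"
      using col by blast
    then have "0 < X $ i $ j * x $ j"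
      using j by simp
    also have "\<dots> \<le> (X *v x) $ i"
      unfolding matrix_vector_mult_nth
      by (rule member_le_sum) (use nn x in \<open>auto simp: nonneg_mat_def nonneg_vec_def\<close>)
    also have "\<dots> \<le> s x"
      unfolding s_def
      by (rule member_le_sum) (use nonneg_vec_matrix_vector_mult[OF nn x(1)] in \<open>auto simp: nonneg_vec_def\<close>)
    finally show ?thesis .
  qed
  have "compact S" "convex S"
    unfolding S_def by (rule compact_convex_simplex)+
  moreover have "(\<chi> i. 1 / real CARD('n)) \<in> S"
    by (simp add: S_def nonneg_vec_def)
  moreover have "continuous_on S f"
  proof -
    have "\<forall>x\<in>S. s x \<noteq> 0"
      using s_pos by force
    then show ?thesis
      unfolding f_def s_def by (intro continuous_intros matrix_vector_mult_linear_continuous_on) auto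
  qed
  moreover have "f \<in> S \<rightarrow> S"
  proof
    fix x assume "x \<in> S"
    then have "0 < s x" "nonneg_vec (X *v x)"
      using s_pos nonneg_vec_matrix_vector_mult[OF nn] by (auto simp: S_def)
    then show "f x \<in> S"
      by (simp add: S_def f_def nonneg_vec_def s_def sum_distrib_left[symmetric])
  qed
  ultimately obtain x where x: "x \<in> S" "f x = x"
    using brouwer[of S f] by blast
  have "X *v x = s x *\<^sub>R f x"
    using s_pos[OF x(1)] by (simp add: f_def)
  then have "X *v x = s x *\<^sub>R x"
    using x(2) by simp
  moreover have "x \<noteq> 0"
    using x(1) by (auto simp: S_def)
  ultimately show ?thesis
    using that x(1) s_pos[OF x(1)] by (auto simp: S_def)
qed

lemma ergodic_perron_vector:
  fixes X :: "real^'n^'n"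
  assumes erg: "ergodic_family (\<lambda>_::'i. X)"
  obtains u r where "\<forall>i. 0 < u $ i" "0 < r" "X *v u = r *\<^sub>R u"
proof -
  have "nonneg_mat X"
    using erg by (simp add: ergodic_family_def)
  then obtain x r where x: "nonneg_vec x" "x \<noteq> 0" and r: "0 < r" "X *v x = r *\<^sub>R x"
    by (rule nonneg_eigenvector_exists) (rule ergodic_family_col_pos[OF erg])
  define tau :: "nat \<Rightarrow> unit \<Rightarrow> 'i" where "tau = (\<lambda>_ _. undefined)"
  show ?thesis
  proof (rule ergodic_orbits_comparable[OF erg x x, where tau = tau])
    fix g :: nat and c :: real
    assume orbit: "\<And>w t i. g \<le> t \<Longrightarrow> 0 < popz (\<lambda>_. X) tau x w t $ i
      \<and> c * popz (\<lambda>_. X) tau x w t $ i \<le> popz (\<lambda>_. X) tau x w t $ i"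
    have "0 < r ^ g * x $ i" for i
      using orbit[of g "()" i] by (simp add: popz_const_eigenvector[OF r(2)])
    then have "\<forall>i. 0 < x $ i"
      using r(1) by (simp add: zero_less_mult_iff)
    then show ?thesis
      by (rule that[OF _ r])
  qed
qed

lemma matrix_vector_mult_sum_eigenvectors:
  fixes X :: "'a::field^'n^'n" and ev :: "'a \<Rightarrow> 'a^'n"
  assumes "\<forall>c\<in>C. X *v ev c = c *s ev c"
  shows "X *v (\<Sum>c\<in>C. a c *s ev c) = (\<Sum>c\<in>C. (a c * c) *s ev c)"
proof -
  have "X *v (\<Sum>c\<in>C. a c *s ev c) = (\<Sum>c\<in>C. X *v (a c *s ev c))"
    by (rule vec.sum)
  also have "\<dots> = (\<Sum>c\<in>C. (a c * c) *s ev c)"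
    by (rule sum.cong) (use assms in \<open>auto simp: vec.scale\<close>)
  finally show ?thesis .
qed

lemma eigenvectors_distinct_eigenvalues_independent:
  fixes X :: "'a::field^'n^'n" and ev :: "'a \<Rightarrow> 'a^'n"
  assumes "finite C" "\<forall>c\<in>C. ev c \<noteq> 0 \<and> X *v ev c = c *s ev c"
  shows "\<forall>a. (\<Sum>c\<in>C. a c *s ev c) = 0 \<longrightarrow> (\<forall>c\<in>C. a c = 0)"
  using assms
proof (induction C rule: finite_induct)
  case empty
  then show ?case by simp
next
  case (insert c0 C)
  show ?case
  proof (intro allI impI)
    fix a
    assume sum0: "(\<Sum>c\<in>insert c0 C. a c *s ev c) = 0"
    have ev: "\<forall>c\<in>insert c0 C. X *v ev c = c *s ev c"
      using insert.prems by blast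
    have "(\<Sum>c\<in>insert c0 C. (a c * (c - c0)) *s ev c)
        = X *v (\<Sum>c\<in>insert c0 C. a c *s ev c) - c0 *s (\<Sum>c\<in>insert c0 C. a c *s ev c)"
      unfolding matrix_vector_mult_sum_eigenvectors[OF ev] vec.scale_sum_right
      by (simp add: sum_subtractf[symmetric] algebra_simps vec.scale_left_diff_distrib)
    then have "(\<Sum>c\<in>C. (a c * (c - c0)) *s ev c) = 0"
      using sum0 insert.hyps by simp
    moreover have "\<forall>c\<in>C. ev c \<noteq> 0 \<and> X *v ev c = c *s ev c"
      using insert.prems by blast
    ultimately have "\<forall>c\<in>C. a c * (c - c0) = 0"
      using insert.IH[rule_format, of "\<lambda>c. a c * (c - c0)"] by simp
    then have C0: "\<forall>c\<in>C. a c = 0"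
      using insert.hyps by auto
    then have "a c0 *s ev c0 = 0"
      using sum0 insert.hyps by simp
    then show "\<forall>c\<in>insert c0 C. a c = 0"
      using C0 insert.prems by (simp add: vec.scale_eq_0_iff)
  qed
qed

lemma finite_eigenvalues:
  fixes X :: "'a::field^'n^'n"
  shows "finite {c. \<exists>v. v \<noteq> 0 \<and> X *v v = c *s v}"
proof (rule ccontr)
  let ?E = "{c. \<exists>v. v \<noteq> 0 \<and> X *v v = c *s v}"
  assume "infinite ?E"
  then obtain F where F: "finite F" "card F = Suc CARD('n)" "F \<subseteq> ?E"
    using infinite_arbitrarily_large by blast
  define ev where "ev c = (SOME v. v \<noteq> 0 \<and> X *v v = c *s v)" for c
  have evp: "\<forall>c\<in>F. ev c \<noteq> 0 \<and> X *v ev c = c *s ev c"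
  proof
    fix c assume "c \<in> F"
    then have "\<exists>v. v \<noteq> 0 \<and> X *v v = c *s v" using F by blast
    then show "ev c \<noteq> 0 \<and> X *v ev c = c *s ev c" unfolding ev_def by (rule someI_ex)
  qed
  have inj: "inj_on ev F"
  proof (rule inj_onI)
    fix c1 c2 assume c: "c1 \<in> F" "c2 \<in> F" "ev c1 = ev c2"
    then have "c1 *s ev c1 = c2 *s ev c1" using evp by metis
    then show "c1 = c2" using evp c by (simp add: vec.scale_cancel_right)
  qed
  have ind: "vec.independent (ev ` F)"
    unfolding vec.independent_explicit
  proof (intro conjI allI impI ballI)
    show "finite (ev ` F)" using F by simp
    fix cc assume S: "(\<Sum>v\<in>ev ` F. cc v *s v) = 0"
    fix v assume vF: "v \<in> ev ` F"
    have "(\<Sum>c\<in>F. cc (ev c) *s ev c) = 0" using S by (simp add: sum.reindex[OF inj])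
    then have "\<forall>c\<in>F. cc (ev c) = 0"
      using eigenvectors_distinct_eigenvalues_independent[OF F(1) evp, rule_format, of "\<lambda>c. cc (ev c)"] by blast
    then show "cc v = 0" using vF by blast
  qed
  have "card (ev ` F) \<le> vec.dim (ev ` F)" using vec.independent_bound_general[OF ind] by blast
  also have "\<dots> \<le> vec.dim (UNIV :: ('a^'n) set)" by (rule vec.dim_subset) simp
  also have "\<dots> = CARD('n)" by (simp add: vec.dim_UNIV card_cart_basis)
  finally have "card F \<le> CARD('n)" using card_image[OF inj] by simp
  with F show False by simp
qed

lemma cmod_eigenvalue_le_perron_root:
  fixes X :: "real^'n^'n" and v :: "complex^'n"
  assumes nn: "nonneg_mat X" and u: "\<forall>i. 0 < u $ i" and eig: "X *v u = r *\<^sub>R u"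
    and v: "v \<noteq> 0" "(\<chi> i j. complex_of_real (X $ i $ j)) *v v = c *s v"
  shows "cmod c \<le> r"
proof -
  define a where "a i = cmod (v $ i)" for i
  define s where "s = Max (range (\<lambda>i. a i / u $ i))"
  have "s \<in> range (\<lambda>i. a i / u $ i)"
    unfolding s_def by (rule Max_in) auto
  then obtain i0 where i0: "s = a i0 / u $ i0"
    by blast
  have a_le: "a j \<le> s * u $ j" for j
    using Max_ge[of "range (\<lambda>i. a i / u $ i)" "a j / u $ j"] u by (simp add: s_def divide_le_eq)
  obtain k where "v $ k \<noteq> 0"
    using v(1) by (metis vec_eq_iff zero_index)
  then have "0 < a k"
    by (simp add: a_def)
  then have "0 < s * u $ k"
    using a_le[of k] by linarith
  then have "0 < s"
    using u[rule_format, of k] by (auto simp: zero_less_mult_iff)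
  have a_i0: "a i0 = s * u $ i0"
    using i0 u[rule_format, of i0] by simp
  then have "0 < a i0"
    using \<open>0 < s\<close> u by simp
  have "cmod c * a i0 = cmod (\<Sum>j\<in>UNIV. complex_of_real (X $ i0 $ j) * v $ j)"
    using arg_cong[OF v(2), of "\<lambda>y. cmod (y $ i0)"]
      by (simp add: a_def norm_mult matrix_vector_mult_def)
  also have "\<dots> \<le> (\<Sum>j\<in>UNIV. X $ i0 $ j * a j)"
    using norm_sum[of "\<lambda>j. complex_of_real (X $ i0 $ j) * v $ j" UNIV] nn
    by (simp add: norm_mult a_def nonneg_mat_def)
  also have "\<dots> \<le> (\<Sum>j\<in>UNIV. X $ i0 $ j * (s * u $ j))"
    by (rule sum_mono) (use nn a_le in \<open>auto simp: nonneg_mat_def intro: mult_left_mono\<close>)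
  also have "\<dots> = s * (X *v u) $ i0"
    by (simp add: matrix_vector_mult_nth sum_distrib_left mult.left_commute)
  also have "\<dots> = r * a i0"
    using eig a_i0 by simp
  finally show ?thesis
    using \<open>0 < a i0\<close> by simp
qed

lemma spectral_radius_eq_perron_root:
  fixes X :: "real^'n^'n"
  assumes nn: "nonneg_mat X" and u: "\<forall>i. 0 < u $ i" and r: "0 < r" and eig: "X *v u = r *\<^sub>R u"
  shows "spectral_radius X = r"
proof -
  define Xc :: "complex^'n^'n" where "Xc = (\<chi> i j. complex_of_real (X $ i $ j))"
  define E where "E = {c. \<exists>v. v \<noteq> 0 \<and> Xc *v v = c *s v}"
  have "{cmod c | c. \<exists>v :: complex^'n. v \<noteq> 0 \<and> Xc *v v = c *s v} = cmod ` E"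
    unfolding E_def by auto
  moreover have "Max (cmod ` E) = r"
  proof (rule Max_eqI)
    show "finite (cmod ` E)"
      unfolding E_def using finite_eigenvalues[of Xc] by simp
    show "y \<le> r" if y: "y \<in> cmod ` E" for y
    proof -
      obtain c v where "y = cmod c" "v \<noteq> 0" "Xc *v v = c *s v"
        using y unfolding E_def by blast
      then show ?thesis
        using cmod_eigenvalue_le_perron_root[OF nn u eig] by (simp add: Xc_def)
    qed
    define v :: "complex^'n" where "v = (\<chi> i. complex_of_real (u $ i))"
    have "v $ undefined \<noteq> 0"
      using u[rule_format, of undefined] by (simp add: v_def)
    then have "v \<noteq> 0"
      by auto
    moreover have "Xc *v v = complex_of_real r *s v"
      using arg_cong[OF eig, of "\<lambda>y. complex_of_real (y $ _)"]
      by (simp add: vec_eq_iff Xc_def v_def matrix_vector_mult_def)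
    ultimately have "complex_of_real r \<in> E"
      unfolding E_def by blast
    then show "r \<in> cmod ` E"
      using r by (metis abs_of_pos image_eqI norm_of_real)
  qed
  ultimately show ?thesis
    unfolding spectral_radius_def Xc_def by simp
qed

lemma LIMSEQ_divide_of_bounded_deviation:
  fixes a :: "nat \<Rightarrow> real"
  assumes "\<And>t. g \<le> t \<Longrightarrow> \<bar>a t - real t * L\<bar> \<le> C"
  shows "(\<lambda>t. a t / real t) \<longlonglongrightarrow> L"
proof -
  have "eventually (\<lambda>t. norm (a t / real t - L) \<le> C / real t) sequentially"
  proof (rule eventually_sequentiallyI[of "max g 1"])
    fix t assume t: "max g 1 \<le> t"
    then have "a t / real t - L = (a t - real t * L) / real t"
      by (simp add: field_simps)
    then show "norm (a t / real t - L) \<le> C / real t"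
      using assms[of t] t by (simp add: divide_right_mono)
  qed
  then have "(\<lambda>t. a t / real t - L) \<longlonglongrightarrow> 0"
    by (rule Lim_null_comparison) (rule lim_const_over_n)
  then show ?thesis
    by (rule LIM_zero_cancel)
qed

lemma log_sgr_const_matrix:
  fixes M :: "'w measure" and tau :: "nat \<Rightarrow> 'w \<Rightarrow> 'i" and X :: "real^'n^'n"
  assumes M: "prob_space M" and erg: "ergodic_family (\<lambda>_::'i. X)"
    and z: "nonneg_vec z" "z \<noteq> 0" and sgr: "is_log_sgr M (\<lambda>_. X) tau z L"
  shows "L = ln (spectral_radius X)"
proof -
  obtain u r where u: "\<forall>i. 0 < u $ i" and r: "0 < r" and eig: "X *v u = r *\<^sub>R u"
    by (rule ergodic_perron_vector[OF erg])
  have nn: "nonneg_mat X"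
    using erg by (simp add: ergodic_family_def)
  have u': "nonneg_vec u" "u \<noteq> 0"
    using u pos_vec_neq_zero by (auto simp: nonneg_vec_def less_imp_le)
  obtain g C where close: "\<And>w t. g \<le> t
      \<Longrightarrow> 0 < l1norm (popz (\<lambda>_. X) tau u w t) \<and> 0 < l1norm (popz (\<lambda>_. X) tau z w t)
      \<and> \<bar>ln (l1norm (popz (\<lambda>_. X) tau u w t)) - ln (l1norm (popz (\<lambda>_. X) tau z w t))\<bar> \<le> C"
    using ergodic_orbits_ln_l1norm_close[OF erg u' z, where tau = tau] by blast
  have ln_u: "ln (l1norm (popz (\<lambda>_. X) tau u w t)) = real t * ln r + ln (l1norm u)" for w t
  proof -
    have "l1norm (popz (\<lambda>_. X) tau u w t) = r ^ t * l1norm u"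
      using u' r by (simp add: popz_const_eigenvector[OF eig] l1norm_def abs_mult sum_distrib_left)
    then show ?thesis
      using r l1norm_pos[OF u'] by (simp add: ln_mult ln_realpow)
  qed
  have "\<bar>ln (l1norm (popz (\<lambda>_. X) tau z w t)) - real t * ln r\<bar> \<le> C + \<bar>ln (l1norm u)\<bar>"
    if "g \<le> t" for w t
    using close[OF that, where w = w] ln_u[of w t] by linarith
  then have "(\<lambda>t. ln (l1norm (popz (\<lambda>_. X) tau z w t)) / real t) \<longlonglongrightarrow> ln r" for w
    by (rule LIMSEQ_divide_of_bounded_deviation)
  then have "AE w in M. L = ln r"
    using sgr unfolding is_log_sgr_def by (auto intro: LIMSEQ_unique)
  then show ?thesis
    using prob_space.AE_const[OF M] spectral_radius_eq_perron_root[OF nn u r eig] by simp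
qed

theorem mainTheorem1:
  fixes M :: "'w measure"
    and tau :: "nat \<Rightarrow> 'w \<Rightarrow> 'i::countable"
    and P :: "'i \<Rightarrow> 'i \<Rightarrow> real"
    and \<pi> :: "'i \<Rightarrow> real"
    and A B :: "'i \<Rightarrow> real^'n^'n"
    and z0 z0' :: "real^'n"
    and LA LB :: real
  assumes chain: "markov_chain M tau P"
    and stat: "stationary P \<pi>"
    and uniq: "\<forall>p. stationary P p \<longrightarrow> p = \<pi>"
    and conv: "geom_converges P \<pi>"
    and ergA: "ergodic_family A"
    and ergB: "ergodic_family B"
    and pattern: "\<forall>e i j. B e $ i $ j = 0 \<longleftrightarrow> A e $ i $ j = 0"
    and z0_nonneg: "\<forall>i. 0 \<le> z0 $ i" and z0_nz: "z0 \<noteq> 0"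
    and z0'_nonneg: "\<forall>i. 0 \<le> z0' $ i" and z0'_nz: "z0' \<noteq> 0"
    and sgrA: "is_log_sgr M A tau z0 LA"
    and sgrB: "is_log_sgr M B tau z0' LB"
  shows "(\<forall>e. Wmin A B e \<le> Wmax A B e \<and> -1 < Wmin A B e)
     \<and> LB + (\<Sum>\<^sub>\<infinity>e. \<pi> e * ln (1 + Wmin A B e)) \<le> LA
     \<and> LA \<le> LB + (\<Sum>\<^sub>\<infinity>e. \<pi> e * ln (1 + Wmax A B e))
     \<and> (\<forall>Bc. (\<forall>e. B e = Bc) \<longrightarrow>
          ln (spectral_radius Bc) + (\<Sum>\<^sub>\<infinity>e. \<pi> e * ln (1 + Wmin A B e)) \<le> LA
        \<and> LA \<le> ln (spectral_radius Bc) + (\<Sum>\<^sub>\<infinity>e. \<pi> e * ln (1 + Wmax A B e)))"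
proof -
  have dist: "distribution \<pi>"
    using stat by (simp add: stationary_def)
  have z0: "nonneg_vec z0" and z0': "nonneg_vec z0'"
    using z0_nonneg z0'_nonneg by (simp_all add: nonneg_vec_def)
  obtain K where pos: "\<forall>e. 0 < 1 + Wmin A B e"
    using ergodic_families_ln_Wmin_Wmax_bounded[OF ergA ergB pattern] by blast
  have W: "\<forall>e. Wmin A B e \<le> Wmax A B e \<and> -1 < Wmin A B e"
  proof
    show "Wmin A B e \<le> Wmax A B e \<and> -1 < Wmin A B e" for e
      using Wmin_le_Wmax[of A B e] pos[rule_format, of e] by linarith
  qed
  have growth: "LB + (\<Sum>\<^sub>\<infinity>e. \<pi> e * ln (1 + Wmin A B e)) \<le> LA"
    "LA \<le> LB + (\<Sum>\<^sub>\<infinity>e. \<pi> e * ln (1 + Wmax A B e))"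
    by (rule log_sgr_comparison[OF chain conv dist ergA ergB pattern z0 z0_nz z0' z0'_nz sgrA sgrB])+
  have const: "ln (spectral_radius Bc) = LB" if "\<forall>e. B e = Bc" for Bc
  proof -
    have "B = (\<lambda>_. Bc)"
      using that by auto
    then have "LB = ln (spectral_radius Bc)"
      using log_sgr_const_matrix[OF markov_chain_prob_space[OF chain] _ z0' z0'_nz] ergB sgrB by simp
    then show ?thesis
      by simp
  qed
  show ?thesis
    using W growth by (simp add: const)
qed

end
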